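(* Let $\ell\ge2$ and let $(\chi_1,\chi_2)$, $(\chi_3,\chi_4)$ be $\mathbf{ss}$-pairs. For $i\in[1,\ell-1]$ let $g_i=\begin{pmatrix}1&0\\ \epsilon\pi^i&1\end{pmatrix}$, $\mathrm B^i=\mathrm B(\mathfrak o_\ell)\cap g_i\mathrm B(\mathfrak o_\ell)g_i^{-1}$, and $(\chi_3,\chi_4)^{g_i}$ the character $x\mapsto(\chi_3,\chi_4)(g_i^{-1}xg_i)$ of $g_i\mathrm B(\mathfrak o_\ell)g_i^{-1}$. Then $\delta_i=\mathrm{Ind}_{\mathrm B^i}^{\mathrm B(\mathfrak o_\ell)}\big((\chi_1,\chi_2)\otimes(\chi_3,\chi_4)^{g_i}\big)$ is irreducible for every $i\in[1,\ell-1]$.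
   Context: Let $\mathcal O$ be a complete discrete valuation ring with maximal ideal $\mathfrak p=\pi\mathcal O$ and finite residue field of odd characteristic. Let $\mathfrak O=\mathcal O[\vartheta]$ be the unramified quadratic extension, with $\vartheta^2\in\mathcal O^\times$ a non-square, and Galois involution $x\mapsto x^\circ$, $\vartheta^\circ=-\vartheta$. Let $\mathfrak o_\ell=\mathcal O/\mathfrak p^\ell$, $\mathfrak O_\ell=\mathfrak O/\pi^\ell\mathfrak O$. $\mathrm G$ is $\mathrm{GL}_2$ (with $R_\ell=\mathfrak o_\ell$, $\epsilon=1$) or $\mathrm{GU}_2$ (with $\mathrm{GU}_2(\mathfrak o_\ell)=\{A\in\mathrm{GL}_2(\mathfrak O_\ell):A^\star A=I\}$, $(a_{ij})^\star=W(a_{ji}^\circ)W^{-1}$, $W=\begin{pmatrix}0&1\\1&0\end{pmatrix}$, $R_\ell=\mathfrak O_\ell$, $\epsilon=\vartheta$). $\mathrm B(\mathfrak o_\ell)$ is the group of upper triangular matrices in $\mathrm G(\mathfrak o_\ell)$. For characters $\chi,\chi'$ of $R_\ell^\times$, $(\chi,\chi')$ is the character $\begin{pmatrix}a&b\\0&c\end{pmatrix}\mapsto\chi(a)\chi'(c)$ of $\mathrm B(\mathfrak o_\ell)$; it is an $\mathbf{ss}$-pair if $\chi\chi'^{-1}$ is nontrivial on $1+\pi^{\ell-1}\mathfrak o_\ell$. *)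

theory Defs
  imports Complex_Main
begin

text \<open>O is modelled as a type 'a of class idom; pi is the uniformizer.
  dvr_unif: every nonzero element is a unit times a power of pi, pi nonzero non-unit
  (this makes O a discrete valuation ring with maximal ideal pi O).\<close>
definition dvr_unif :: "'a::idom \<Rightarrow> bool" where
  "dvr_unif p \<longleftrightarrow> p \<noteq> 0 \<and> \<not> p dvd 1 \<and>
     (\<forall>x. x \<noteq> 0 \<longrightarrow> (\<exists>u n. u dvd 1 \<and> x = u * p ^ n))"

definition pi_complete :: "'a::idom \<Rightarrow> bool" where
  "pi_complete p \<longleftrightarrow> (\<forall>x::nat \<Rightarrow> 'a. (\<forall>n. p ^ n dvd (x (Suc n) - x n)) \<longrightarrow>
       (\<exists>y. \<forall>n. p ^ n dvd (y - x n)))"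

definition residue_field :: "'a::idom \<Rightarrow> 'a set set" where
  "residue_field p = range (\<lambda>x. {y. p dvd (x - y)})"

section \<open>The unramified quadratic extension O[theta], theta^2 = d, as pairs (a,b) = a + b theta\<close>

type_synonym 'a ext = "'a \<times> 'a"

definition eadd :: "'a::comm_ring_1 ext \<Rightarrow> 'a ext \<Rightarrow> 'a ext" where
  "eadd x y = (fst x + fst y, snd x + snd y)"

definition emul :: "'a::comm_ring_1 \<Rightarrow> 'a ext \<Rightarrow> 'a ext \<Rightarrow> 'a ext" where
  "emul d x y = (fst x * fst y + d * (snd x * snd y), fst x * snd y + snd x * fst y)"

definition econj :: "'a::comm_ring_1 ext \<Rightarrow> 'a ext" where
  "econj x = (fst x, - snd x)"

section \<open>Reduction modulo pi^l: R_l elements are residue classes (sets of pairs)\<close>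

type_synonym 'a cl = "('a \<times> 'a) set"

definition econg :: "'a::comm_ring_1 \<Rightarrow> nat \<Rightarrow> 'a ext \<Rightarrow> 'a ext \<Rightarrow> bool" where
  "econg p l x y \<longleftrightarrow> p ^ l dvd (fst x - fst y) \<and> p ^ l dvd (snd x - snd y)"

definition ecls :: "'a::comm_ring_1 \<Rightarrow> nat \<Rightarrow> 'a ext \<Rightarrow> 'a cl" where
  "ecls p l x = {y. econg p l x y}"

text \<open>The big ring O_l = O[theta]/pi^l and the small ring o_l = O/p^l (as a subring).\<close>
definition bigO :: "'a::comm_ring_1 \<Rightarrow> nat \<Rightarrow> 'a cl set" where
  "bigO p l = range (ecls p l)"

definition smallo :: "'a::comm_ring_1 \<Rightarrow> nat \<Rightarrow> 'a cl set" where
  "smallo p l = range (\<lambda>a. ecls p l (a, 0))"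

definition qadd :: "'a::comm_ring_1 \<Rightarrow> nat \<Rightarrow> 'a cl \<Rightarrow> 'a cl \<Rightarrow> 'a cl" where
  "qadd p l X Y = (\<Union>x\<in>X. \<Union>y\<in>Y. ecls p l (eadd x y))"

definition qmul :: "'a::comm_ring_1 \<Rightarrow> 'a \<Rightarrow> nat \<Rightarrow> 'a cl \<Rightarrow> 'a cl \<Rightarrow> 'a cl" where
  "qmul d p l X Y = (\<Union>x\<in>X. \<Union>y\<in>Y. ecls p l (emul d x y))"

definition qconj :: "'a::comm_ring_1 \<Rightarrow> nat \<Rightarrow> 'a cl \<Rightarrow> 'a cl" where
  "qconj p l X = (\<Union>x\<in>X. ecls p l (econj x))"

definition qzero :: "'a::comm_ring_1 \<Rightarrow> nat \<Rightarrow> 'a cl" where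
  "qzero p l = ecls p l (0, 0)"

definition qone :: "'a::comm_ring_1 \<Rightarrow> nat \<Rightarrow> 'a cl" where
  "qone p l = ecls p l (1, 0)"

definition qunits :: "'a::comm_ring_1 \<Rightarrow> 'a \<Rightarrow> nat \<Rightarrow> 'a cl set \<Rightarrow> 'a cl set" where
  "qunits d p l R = {X \<in> R. \<exists>Y\<in>R. qmul d p l X Y = qone p l}"

text \<open>R_l: o_l for GL_2 (unitary = False), O_l for GU_2 (unitary = True).\<close>
definition Rl :: "'a::comm_ring_1 \<Rightarrow> nat \<Rightarrow> bool \<Rightarrow> 'a cl set" where
  "Rl p l unitary = (if unitary then bigO p l else smallo p l)"

text \<open>epsilon = 1 for GL_2, epsilon = theta for GU_2.\<close>
definition epsi :: "bool \<Rightarrow> 'a::comm_ring_1 ext" where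
  "epsi unitary = (if unitary then (0, 1) else (1, 0))"

section \<open>2x2 matrices (a, b, c, e) = [[a, b], [c, e]] over R_l\<close>

type_synonym 'a mat = "'a cl \<times> 'a cl \<times> 'a cl \<times> 'a cl"

definition mats :: "'a cl set \<Rightarrow> 'a mat set" where
  "mats R = {(a, b, c, e). a \<in> R \<and> b \<in> R \<and> c \<in> R \<and> e \<in> R}"

definition mmul :: "'a::comm_ring_1 \<Rightarrow> 'a \<Rightarrow> nat \<Rightarrow> 'a mat \<Rightarrow> 'a mat \<Rightarrow> 'a mat" where
  "mmul d p l A B = (case A of (a, b, c, e) \<Rightarrow> case B of (a', b', c', e') \<Rightarrow>
     (qadd p l (qmul d p l a a') (qmul d p l b c'), qadd p l (qmul d p l a b') (qmul d p l b e'),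
      qadd p l (qmul d p l c a') (qmul d p l e c'), qadd p l (qmul d p l c b') (qmul d p l e e')))"

definition mone :: "'a::comm_ring_1 \<Rightarrow> nat \<Rightarrow> 'a mat" where
  "mone p l = (qone p l, qzero p l, qzero p l, qone p l)"

definition Wmat :: "'a::comm_ring_1 \<Rightarrow> nat \<Rightarrow> 'a mat" where
  "Wmat p l = (qzero p l, qone p l, qone p l, qzero p l)"

definition ctrans :: "'a::comm_ring_1 \<Rightarrow> nat \<Rightarrow> 'a mat \<Rightarrow> 'a mat" where
  "ctrans p l A = (case A of (a, b, c, e) \<Rightarrow> (qconj p l a, qconj p l c, qconj p l b, qconj p l e))"

text \<open>A^star = W (a_ji conj) W^{-1}; note W^{-1} = W.\<close>
definition mstar :: "'a::comm_ring_1 \<Rightarrow> 'a \<Rightarrow> nat \<Rightarrow> 'a mat \<Rightarrow> 'a mat" where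
  "mstar d p l A = mmul d p l (Wmat p l) (mmul d p l (ctrans p l A) (Wmat p l))"

text \<open>G(o_l): GL_2(o_l), resp. GU_2(o_l) = {A in GL_2(O_l). A^star A = I}.\<close>
definition Gl :: "'a::comm_ring_1 \<Rightarrow> 'a \<Rightarrow> nat \<Rightarrow> bool \<Rightarrow> 'a mat set" where
  "Gl d p l unitary = {A \<in> mats (Rl p l unitary).
      (\<exists>B\<in>mats (Rl p l unitary). mmul d p l A B = mone p l \<and> mmul d p l B A = mone p l) \<and>
      (unitary \<longrightarrow> mmul d p l (mstar d p l A) A = mone p l)}"

definition Bor :: "'a::comm_ring_1 \<Rightarrow> 'a \<Rightarrow> nat \<Rightarrow> bool \<Rightarrow> 'a mat set" where
  "Bor d p l unitary = {A \<in> Gl d p l unitary. fst (snd (snd A)) = qzero p l}"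

definition minv :: "'a::comm_ring_1 \<Rightarrow> 'a \<Rightarrow> nat \<Rightarrow> 'a cl set \<Rightarrow> 'a mat \<Rightarrow> 'a mat" where
  "minv d p l R A = (THE B. B \<in> mats R \<and> mmul d p l A B = mone p l \<and> mmul d p l B A = mone p l)"

definition gmat :: "'a::comm_ring_1 \<Rightarrow> 'a \<Rightarrow> nat \<Rightarrow> bool \<Rightarrow> nat \<Rightarrow> 'a mat" where
  "gmat d p l unitary i =
     (qone p l, qzero p l, ecls p l (emul d (epsi unitary) (p ^ i, 0)), qone p l)"

definition Bsub :: "'a::comm_ring_1 \<Rightarrow> 'a \<Rightarrow> nat \<Rightarrow> bool \<Rightarrow> nat \<Rightarrow> 'a mat set" where
  "Bsub d p l unitary i = {x \<in> Bor d p l unitary. \<exists>y\<in>Bor d p l unitary.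
      x = mmul d p l (gmat d p l unitary i)
            (mmul d p l y (minv d p l (Rl p l unitary) (gmat d p l unitary i)))}"

definition is_char :: "'a::comm_ring_1 \<Rightarrow> 'a \<Rightarrow> nat \<Rightarrow> 'a cl set \<Rightarrow> ('a cl \<Rightarrow> complex) \<Rightarrow> bool" where
  "is_char d p l R \<chi> \<longleftrightarrow> (\<forall>x\<in>qunits d p l R. \<chi> x \<noteq> 0) \<and>
     (\<forall>x\<in>qunits d p l R. \<forall>y\<in>qunits d p l R. \<chi> (qmul d p l x y) = \<chi> x * \<chi> y)"

definition pchar :: "('a cl \<Rightarrow> complex) \<Rightarrow> ('a cl \<Rightarrow> complex) \<Rightarrow> 'a mat \<Rightarrow> complex" where
  "pchar \<chi> \<chi>' A = \<chi> (fst A) * \<chi>' (snd (snd (snd A)))"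

definition ss_pair :: "'a::comm_ring_1 \<Rightarrow> nat \<Rightarrow> ('a cl \<Rightarrow> complex) \<Rightarrow> ('a cl \<Rightarrow> complex) \<Rightarrow> bool" where
  "ss_pair p l \<chi> \<chi>' \<longleftrightarrow>
     (\<exists>a. \<chi> (ecls p l (1 + p ^ (l - 1) * a, 0)) * inverse (\<chi>' (ecls p l (1 + p ^ (l - 1) * a, 0))) \<noteq> 1)"

definition ind_space :: "'g set \<Rightarrow> ('g \<Rightarrow> 'g \<Rightarrow> 'g) \<Rightarrow> 'g set \<Rightarrow> ('g \<Rightarrow> complex) \<Rightarrow> ('g \<Rightarrow> complex) set" where
  "ind_space G m H \<theta> = {f. (\<forall>x. x \<notin> G \<longrightarrow> f x = 0) \<and> (\<forall>h\<in>H. \<forall>x\<in>G. f (m h x) = \<theta> h * f x)}"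

definition rtrans :: "'g set \<Rightarrow> ('g \<Rightarrow> 'g \<Rightarrow> 'g) \<Rightarrow> 'g \<Rightarrow> ('g \<Rightarrow> complex) \<Rightarrow> ('g \<Rightarrow> complex)" where
  "rtrans G m g f = (\<lambda>x. if x \<in> G then f (m x g) else 0)"

definition csubspace :: "('g \<Rightarrow> complex) set \<Rightarrow> bool" where
  "csubspace W \<longleftrightarrow> (\<lambda>x. 0) \<in> W \<and> (\<forall>f\<in>W. \<forall>g\<in>W. (\<lambda>x. f x + g x) \<in> W) \<and>
     (\<forall>c. \<forall>f\<in>W. (\<lambda>x. c * f x) \<in> W)"

definition irred_ind :: "'g set \<Rightarrow> ('g \<Rightarrow> 'g \<Rightarrow> 'g) \<Rightarrow> 'g set \<Rightarrow> ('g \<Rightarrow> complex) \<Rightarrow> bool" where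
  "irred_ind G m H \<theta> \<longleftrightarrow> ind_space G m H \<theta> \<noteq> {\<lambda>x. 0} \<and>
     (\<forall>W. W \<subseteq> ind_space G m H \<theta> \<and> csubspace W \<and> (\<forall>g\<in>G. \<forall>f\<in>W. rtrans G m g f \<in> W)
        \<longrightarrow> W = {\<lambda>x. 0} \<or> W = ind_space G m H \<theta>)"

end

theory Submission
  imports Defs "HOL-Algebra.Group_Action" "HOL-Library.Product_Plus"
begin

text \<open>By Mackey's criterion, inducing a linear character \<open>\<theta>\<close> from a subgroup \<open>H\<close> of a finite
  group gives an irreducible representation once every \<open>x \<notin> H\<close> admits \<open>k, k' \<in> H\<close> with
  \<open>x k = k' x\<close> and \<open>\<theta> k \<noteq> \<theta> k'\<close>.

  For \<open>H = B\<^sup>i \<subseteq> B(o\<^sub>\<ell>)\<close> and \<open>\<tau> = \<epsilon> \<pi>\<^sup>i\<close>, an upper triangular \<open>x = (\<alpha>, \<beta>; 0, \<gamma>)\<close>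
  lies outside \<open>B\<^sup>i\<close> exactly when \<open>\<tau> (\<alpha> - \<gamma> + \<tau> \<beta>) \<noteq> 0\<close>; write
  \<open>\<gamma>\<inverse> (\<alpha> - \<gamma> + \<tau> \<beta>) = v \<pi>\<^sup>m\<close> with \<open>v\<close> a unit, so that \<open>i + m < \<ell>\<close>.
  Take \<open>k = (A, B; 0, A\<inverse>)\<close> with \<open>A = 1 + \<pi>\<^sup>\<ell>\<^sup>-\<^sup>1\<^sup>-\<^sup>m y \<in> o\<^sub>\<ell>\<^sup>\<times>\<close> and
  \<open>\<tau> B = A\<inverse> - A\<close>, and \<open>k' = x k x\<inverse> = (A, B'; 0, A\<inverse>)\<close>. Both lie in \<open>B\<^sup>i\<close>, and
  \<open>\<tau> B' - \<tau> B = (A\<inverse> - A) v \<pi>\<^sup>m \<equiv> \<pi>\<^sup>\<ell>\<^sup>-\<^sup>1 a\<close> for \<open>y = -a / (2 v)\<close>. Hence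
  \<open>\<theta> k' / \<theta> k = (\<chi>\<^sub>3 \<chi>\<^sub>4\<inverse>) (1 + \<pi>\<^sup>\<ell>\<^sup>-\<^sup>1 a)\<close>, which is not \<open>1\<close> for a suitable \<open>a\<close>
  because \<open>(\<chi>\<^sub>3, \<chi>\<^sub>4)\<close> is an ss-pair. In the unitary case \<open>k\<close> is unitary because \<open>A\<close> is
  real and \<open>B\<close> purely imaginary, and the unitarity of \<open>x\<close> gives \<open>\<gamma>\<inverse> = \<alpha>\<^sup>\<circ>\<close> and makes
  \<open>\<gamma>\<inverse> (\<alpha> - \<gamma> + \<tau> \<beta>)\<close> real.\<close>

section \<open>Mackey's irreducibility criterion\<close>

lemma csubspace_scale: "csubspace W \<Longrightarrow> f \<in> W \<Longrightarrow> (\<lambda>x. c * f x) \<in> W"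
  unfolding csubspace_def by blast

lemma csubspace_sum:
  assumes W: "csubspace W" and "finite S" and "\<And>s. s \<in> S \<Longrightarrow> f s \<in> W"
  shows "(\<lambda>x. \<Sum>s\<in>S. c s * f s x) \<in> W"
  using assms(2,3)
proof (induction S rule: finite_induct)
  case empty
  then show ?case using W by (simp add: csubspace_def)
next
  case (insert s S)
  then have "(\<lambda>x. c s * f s x) \<in> W" and "(\<lambda>x. \<Sum>s\<in>S. c s * f s x) \<in> W"
    using csubspace_scale[OF W] by blast+
  then show ?case using insert W unfolding csubspace_def by simp
qed

lemma (in group) sum_reindex_left_mult:
  assumes "subgroup K G" and "k \<in> K"
  shows "(\<Sum>h\<in>K. f h) = (\<Sum>h\<in>K. f (k \<otimes> h))"
proof -
  have k: "k \<in> carrier G" using assms(1,2) by (rule subgroup.mem_carrier)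
  have "inj_on ((\<otimes>) k) K"
    using inj_on_cmult[OF k] subgroup.subset[OF assms(1)] by (rule inj_on_subset)
  moreover have "(\<otimes>) k ` K = K"
    using coset_join3(1)[OF k assms(1,2)] by (auto simp: l_coset_def)
  ultimately have "bij_betw ((\<otimes>) k) K K" by (simp add: bij_betw_def)
  then show ?thesis by (rule sum.reindex_bij_betw[symmetric])
qed

lemma (in group) mem_conj_coset_iff:
  assumes "H \<subseteq> carrier G" and g: "g \<in> carrier G" and x: "x \<in> carrier G"
  shows "x \<in> g <# H #> inv g \<longleftrightarrow> inv g \<otimes> (x \<otimes> g) \<in> H"
proof -
  have "x \<in> g <# H #> inv g \<longleftrightarrow> (\<exists>h\<in>H. x = g \<otimes> h \<otimes> inv g)"
    unfolding l_coset_def r_coset_def by blast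
  also have "\<dots> \<longleftrightarrow> (\<exists>h\<in>H. inv g \<otimes> (x \<otimes> g) = h)"
  proof (intro bex_cong refl)
    fix h assume "h \<in> H"
    then have h: "h \<in> carrier G" using assms(1) by blast
    have "x = g \<otimes> h \<otimes> inv g \<longleftrightarrow> g \<otimes> h = x \<otimes> g"
      using g h x by (simp add: inv_solve_right)
    also have "\<dots> \<longleftrightarrow> inv g \<otimes> (x \<otimes> g) = h"
      using inv_solve_left[of h g "x \<otimes> g"] g h x by auto
    finally show "x = g \<otimes> h \<otimes> inv g \<longleftrightarrow> inv g \<otimes> (x \<otimes> g) = h" .
  qed
  finally show ?thesis by simp
qed

lemma (in group) conj_mult:
  assumes g: "g \<in> carrier G" and "x \<in> carrier G" "y \<in> carrier G"
  shows "inv g \<otimes> (x \<otimes> y \<otimes> g) = (inv g \<otimes> (x \<otimes> g)) \<otimes> (inv g \<otimes> (y \<otimes> g))"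
proof -
  have cancel: "g \<otimes> (inv g \<otimes> z) = z" if "z \<in> carrier G" for z
    using that g by (simp add: m_assoc[symmetric])
  show ?thesis using assms by (simp add: m_assoc cancel)
qed

locale induced_character = group G + subgroup H G
  for G (structure) and H and \<theta> :: "'g \<Rightarrow> complex" +
  assumes finite_carrier: "finite (carrier G)"
    and char_mult: "\<lbrakk>x \<in> H; y \<in> H\<rbrakk> \<Longrightarrow> \<theta> (x \<otimes> y) = \<theta> x * \<theta> y"
    and char_nonzero: "x \<in> H \<Longrightarrow> \<theta> x \<noteq> 0"
begin

abbreviation ind :: "('g \<Rightarrow> complex) set"
  where "ind \<equiv> ind_space (carrier G) (\<otimes>) H \<theta>"

abbreviation translate :: "'g \<Rightarrow> ('g \<Rightarrow> complex) \<Rightarrow> 'g \<Rightarrow> complex"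
  where "translate \<equiv> rtrans (carrier G) (\<otimes>)"

lemma finite_subgroup: "finite H"
  using finite_carrier subset by (rule finite_subset[rotated])

lemma card_subgroup_nonzero: "of_nat (card H) \<noteq> (0::complex)"
  using subgroup.finite_imp_card_positive[OF is_subgroup finite_carrier] by simp

lemma char_one: "\<theta> \<one> = 1"
  using char_mult[of \<one> \<one>] char_nonzero[of \<one>] by simp

lemma char_inv: "h \<in> H \<Longrightarrow> \<theta> (inv h) * \<theta> h = 1"
  using char_mult[of "inv h" h] char_one by simp

lemma ind_equivariant: "\<lbrakk>f \<in> ind; h \<in> H; x \<in> carrier G\<rbrakk> \<Longrightarrow> f (h \<otimes> x) = \<theta> h * f x"
  by (simp add: ind_space_def)

lemma ind_outside: "\<lbrakk>f \<in> ind; x \<notin> carrier G\<rbrakk> \<Longrightarrow> f x = 0"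
  by (simp add: ind_space_def)

definition char_ext :: "'g \<Rightarrow> complex"
  where "char_ext x = (if x \<in> H then \<theta> x else 0)"

lemma char_ext_one: "char_ext \<one> = 1"
  by (simp add: char_ext_def char_one)

lemma char_ext_in_ind: "char_ext \<in> ind"
  unfolding ind_space_def
proof (intro CollectI conjI allI impI ballI)
  fix x assume "x \<notin> carrier G"
  then show "char_ext x = 0" by (auto simp: char_ext_def)
next
  fix h x assume h: "h \<in> H" and x: "x \<in> carrier G"
  have cancel: "inv h \<otimes> (h \<otimes> x) = x"
    using h x by (simp add: inv_solve_left')
  have "h \<otimes> x \<in> H \<longleftrightarrow> x \<in> H"
    using subgroup.m_closed[OF is_subgroup, of "inv h" "h \<otimes> x"] subgroup.m_inv_closed[OF is_subgroup h]
      subgroup.m_closed[OF is_subgroup h, of x] cancel by auto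
  then show "char_ext (h \<otimes> x) = \<theta> h * char_ext x"
    using h by (simp add: char_ext_def char_mult)
qed

lemma sum_twisted_values_vanish:
  assumes f: "f \<in> ind" and x: "x \<in> carrier G" and k: "k \<in> H" "k' \<in> H"
    and swap: "x \<otimes> k = k' \<otimes> x" and ne: "\<theta> k \<noteq> \<theta> k'"
  shows "(\<Sum>h\<in>H. inverse (\<theta> h) * f (x \<otimes> h)) = 0"
proof -
  let ?S = "\<Sum>h\<in>H. inverse (\<theta> h) * f (x \<otimes> h)"
  have "?S = (\<Sum>h\<in>H. inverse (\<theta> (k \<otimes> h)) * f (x \<otimes> (k \<otimes> h)))"
    by (rule sum_reindex_left_mult[OF is_subgroup k(1)])
  also have "\<dots> = (\<Sum>h\<in>H. inverse (\<theta> k) * \<theta> k' * (inverse (\<theta> h) * f (x \<otimes> h)))"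
  proof (rule sum.cong[OF refl])
    fix h assume h: "h \<in> H"
    have "x \<otimes> (k \<otimes> h) = (x \<otimes> k) \<otimes> h"
      using x k h by (simp add: m_assoc)
    also have "\<dots> = k' \<otimes> (x \<otimes> h)"
      using x k h by (simp add: m_assoc swap)
    finally have "x \<otimes> (k \<otimes> h) = k' \<otimes> (x \<otimes> h)" .
    then show "inverse (\<theta> (k \<otimes> h)) * f (x \<otimes> (k \<otimes> h)) = inverse (\<theta> k) * \<theta> k' * (inverse (\<theta> h) * f (x \<otimes> h))"
      using ind_equivariant[OF f k(2)] x h k by (simp add: char_mult)
  qed
  also have "\<dots> = inverse (\<theta> k) * \<theta> k' * ?S"
    by (simp add: sum_distrib_left)
  finally have "(1 - inverse (\<theta> k) * \<theta> k') * ?S = 0"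
    by (simp add: algebra_simps)
  moreover have "inverse (\<theta> k) * \<theta> k' \<noteq> 1"
    using ne char_nonzero[OF k(1)] by (auto simp: field_simps)
  ultimately show ?thesis by simp
qed

lemma ind_spanned_by_translates:
  assumes f: "f \<in> ind"
  shows "f = (\<lambda>x. \<Sum>y\<in>carrier G. f (inv y) / of_nat (card H) * translate y char_ext x)"
proof
  fix x
  show "f x = (\<Sum>y\<in>carrier G. f (inv y) / of_nat (card H) * translate y char_ext x)"
  proof (cases "x \<in> carrier G")
    case False
    then show ?thesis by (simp add: ind_outside[OF f] rtrans_def)
  next
    case x: True
    have "(\<Sum>y\<in>carrier G. f (inv y) * char_ext (x \<otimes> y))
        = (\<Sum>w\<in>carrier G. f (inv (inv x \<otimes> w)) * char_ext (x \<otimes> (inv x \<otimes> w)))"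
      by (rule sum_reindex_left_mult[OF subgroup_self]) (use x in simp)
    also have "\<dots> = (\<Sum>w\<in>carrier G. f (inv w \<otimes> x) * char_ext w)"
    proof (rule sum.cong[OF refl])
      fix w assume w: "w \<in> carrier G"
      have "x \<otimes> (inv x \<otimes> w) = w"
        using x w by (metis m_assoc r_inv l_one inv_closed)
      then show "f (inv (inv x \<otimes> w)) * char_ext (x \<otimes> (inv x \<otimes> w)) = f (inv w \<otimes> x) * char_ext w"
        using x w by (simp add: inv_mult_group)
    qed
    also have "\<dots> = (\<Sum>w\<in>H. f (inv w \<otimes> x) * char_ext w)"
      by (rule sum.mono_neutral_right[OF finite_carrier subset]) (simp add: char_ext_def)
    also have "\<dots> = (\<Sum>w\<in>H. f x)"
      using x ind_equivariant[OF f] char_inv by (intro sum.cong) (simp_all add: char_ext_def)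
    finally show ?thesis
      using x card_subgroup_nonzero by (simp add: rtrans_def sum_divide_distrib[symmetric])
  qed
qed

end

locale mackey_criterion = induced_character +
  assumes mackey: "x \<in> carrier G - H \<Longrightarrow> \<exists>k\<in>H. \<exists>k'\<in>H. x \<otimes> k = k' \<otimes> x \<and> \<theta> k \<noteq> \<theta> k'"
begin

lemma averaged_translates:
  assumes f: "f \<in> ind"
  shows "(\<lambda>x. \<Sum>h\<in>H. inverse (\<theta> h) * translate h f x) = (\<lambda>x. of_nat (card H) * f \<one> * char_ext x)"
proof
  fix x
  show "(\<Sum>h\<in>H. inverse (\<theta> h) * translate h f x) = of_nat (card H) * f \<one> * char_ext x"
  proof (cases "x \<in> carrier G")
    case False
    then have "x \<notin> H" using subgroup.subset[OF is_subgroup] by blast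
    then show ?thesis using False by (simp add: rtrans_def char_ext_def)
  next
    case x: True
    show ?thesis
    proof (cases "x \<in> H")
      case True
      have "inverse (\<theta> h) * f (x \<otimes> h) = \<theta> x * f \<one>" if h: "h \<in> H" for h
        using ind_equivariant[OF f subgroup.m_closed[OF is_subgroup True h], of \<one>] True h char_nonzero[OF h]
        by (simp add: char_mult)
      then show ?thesis using True by (simp add: rtrans_def char_ext_def)
    next
      case False
      then obtain k k' where "k \<in> H" "k' \<in> H" "x \<otimes> k = k' \<otimes> x" "\<theta> k \<noteq> \<theta> k'"
        using mackey x by blast
      then show ?thesis
        using sum_twisted_values_vanish[OF f x] False x by (simp add: rtrans_def char_ext_def)
    qed
  qed
qed

lemma char_ext_in_invariant_subspace:
  assumes sub: "W \<subseteq> ind" and W: "csubspace W" and nonzero: "W \<noteq> {\<lambda>x. 0}"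
    and inv: "\<And>g f. g \<in> carrier G \<Longrightarrow> f \<in> W \<Longrightarrow> translate g f \<in> W"
  shows "char_ext \<in> W"
proof -
  obtain f x0 where f: "f \<in> W" and fx0: "f x0 \<noteq> 0"
    using W nonzero unfolding csubspace_def by blast
  have x0: "x0 \<in> carrier G" using ind_outside fx0 f sub by blast
  define f1 where "f1 = translate x0 f"
  have f1: "f1 \<in> W" "f1 \<one> \<noteq> 0"
    using inv[OF x0 f] fx0 x0 by (simp_all add: f1_def rtrans_def)
  define c where "c = of_nat (card H) * f1 \<one>"
  have "(\<lambda>x. \<Sum>h\<in>H. inverse (\<theta> h) * translate h f1 x) \<in> W"
    using inv f1(1) by (intro csubspace_sum[OF W finite_subgroup]) auto
  then have "(\<lambda>x. c * char_ext x) \<in> W"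
    using averaged_translates f1(1) sub by (auto simp: c_def)
  then have "(\<lambda>x. inverse c * (c * char_ext x)) \<in> W"
    by (rule csubspace_scale[OF W])
  moreover have "c \<noteq> 0"
    using f1(2) card_subgroup_nonzero by (simp add: c_def)
  ultimately show ?thesis by (simp add: mult.assoc[symmetric])
qed

theorem irred_ind: "irred_ind (carrier G) (\<otimes>) H \<theta>"
  unfolding irred_ind_def
proof (intro conjI allI impI)
  show "ind \<noteq> {\<lambda>x. 0}"
    using char_ext_in_ind char_ext_one by force
next
  fix W assume "W \<subseteq> ind \<and> csubspace W \<and> (\<forall>g\<in>carrier G. \<forall>f\<in>W. translate g f \<in> W)"
  then have sub: "W \<subseteq> ind" and W: "csubspace W"
    and inv: "\<And>g f. g \<in> carrier G \<Longrightarrow> f \<in> W \<Longrightarrow> translate g f \<in> W" by auto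
  have "ind \<subseteq> W" if "W \<noteq> {\<lambda>x. 0}"
  proof
    fix f assume f: "f \<in> ind"
    have "(\<lambda>x. \<Sum>y\<in>carrier G. f (inv y) / of_nat (card H) * translate y char_ext x) \<in> W"
      using inv char_ext_in_invariant_subspace[OF sub W that inv]
      by (intro csubspace_sum[OF W finite_carrier]) auto
    also have "(\<lambda>x. \<Sum>y\<in>carrier G. f (inv y) / of_nat (card H) * translate y char_ext x) = f"
      by (rule ind_spanned_by_translates[OF f, symmetric])
    finally show "f \<in> W" .
  qed
  then show "W = {\<lambda>x. 0} \<or> W = ind" using sub by blast
qed

end

section \<open>Units and valuations in \<open>\<O>\<close>\<close>

lemma dvr_unit:
  assumes "dvr_unif p" and "\<not> p dvd x"
  shows "\<exists>y. x * y = 1"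
proof -
  have "x \<noteq> 0" using assms(2) by auto
  then obtain w n where w: "w dvd 1" "x = w * p ^ n"
    using assms(1) unfolding dvr_unif_def by blast
  have "n = 0" using assms(2) w(2) by (cases n) auto
  moreover obtain k where "1 = w * k" using w(1) unfolding dvd_def by blast
  ultimately show ?thesis using w(2) by auto
qed

lemma dvr_unit_near_one:
  assumes "dvr_unif p" and "p dvd x - 1"
  shows "\<exists>y. x * y = 1"
proof (rule dvr_unit[OF assms(1)])
  show "\<not> p dvd x"
  proof
    assume "p dvd x"
    then have "p dvd x - (x - 1)" using assms(2) by (rule dvd_diff)
    then show False using assms(1) by (simp add: dvr_unif_def)
  qed
qed

lemma dvr_factor:
  assumes "dvr_unif p" and "x \<noteq> 0"
  shows "\<exists>v v' m. v * v' = 1 \<and> x = v * p ^ m"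
proof -
  obtain v m where "v dvd 1" and "x = v * p ^ m"
    using assms unfolding dvr_unif_def by blast
  moreover from \<open>v dvd 1\<close> obtain v' where "1 = v * v'" unfolding dvd_def by blast
  ultimately show ?thesis by auto
qed

lemma power_exponent_bound: "\<not> p ^ l dvd p ^ n * w \<Longrightarrow> n < l" for p :: "'a::comm_semiring_1"
  using le_imp_power_dvd[of l n p] dvd_mult2[of "p ^ l" "p ^ n" w] by (cases "n < l") auto

lemma finite_reps_mod_power:
  fixes p :: "'a::idom"
  assumes "finite (residue_field p)"
  shows "\<exists>S. finite S \<and> (\<forall>x. \<exists>r\<in>S. p ^ n dvd x - r)"
proof (induction n)
  case 0
  show ?case by (rule exI[of _ "{0}"]) simp
next
  case (Suc n)
  then obtain S where S: "finite S" "\<And>x. \<exists>r\<in>S. p ^ n dvd x - r" by blast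
  define S1 where "S1 = (\<lambda>C. SOME r. r \<in> C) ` residue_field p"
  have S1: "\<exists>s\<in>S1. p dvd x - s" for x
  proof -
    let ?C = "{y. p dvd x - y}"
    have "?C \<in> residue_field p" by (simp add: residue_field_def)
    moreover have "(SOME r. r \<in> ?C) \<in> ?C" by (rule someI[of _ x]) simp
    ultimately show ?thesis unfolding S1_def by blast
  qed
  have "\<exists>r\<in>(\<lambda>(r, s). r + p ^ n * s) ` (S \<times> S1). p ^ Suc n dvd x - r" for x
  proof -
    obtain r q where "r \<in> S" and q: "x - r = p ^ n * q" using S(2)[of x] by (auto simp: dvd_def)
    obtain s t where "s \<in> S1" and t: "q - s = p * t" using S1[of q] by (auto simp: dvd_def)
    have "x - (r + p ^ n * s) = p ^ Suc n * t"
      using q t by (simp add: algebra_simps)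
    then show ?thesis using \<open>r \<in> S\<close> \<open>s \<in> S1\<close> by force
  qed
  moreover have "finite ((\<lambda>(r, s). r + p ^ n * s) ` (S \<times> S1))"
    using S(1) assms by (simp add: S1_def)
  ultimately show ?case by blast
qed

section \<open>Residue classes modulo \<open>\<pi>\<^sup>\<ell>\<close>\<close>

lemma eadd_eq_plus [simp]: "eadd x y = x + y"
  by (simp add: eadd_def plus_prod_def)

lemma dvd_diff_swap: "q dvd a - b \<Longrightarrow> q dvd b - (a::'a::comm_ring_1)"
  using dvd_minus_iff[of q "a - b"] by simp

lemma dvd_diff_trans: "q dvd a - b \<Longrightarrow> q dvd b - c \<Longrightarrow> q dvd a - (c::'a::comm_ring_1)"
  using dvd_add[of q "a - b" "b - c"] by simp

lemma econg_refl [simp]: "econg p l x x"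
  by (simp add: econg_def)

lemma econg_sym: "econg p l x y \<Longrightarrow> econg p l y x"
  unfolding econg_def by (blast intro: dvd_diff_swap)

lemma econg_trans [trans]: "econg p l x y \<Longrightarrow> econg p l y z \<Longrightarrow> econg p l x z"
  unfolding econg_def by (blast intro: dvd_diff_trans)

lemma econg_add: "econg p l x x' \<Longrightarrow> econg p l y y' \<Longrightarrow> econg p l (x + y) (x' + y')"
  unfolding econg_def by (simp add: add_diff_add dvd_add)

lemma econg_diff: "econg p l x x' \<Longrightarrow> econg p l y y' \<Longrightarrow> econg p l (x - y) (x' - y')"
proof -
  have "u - v - (u' - v') = (u - u') - (v - v')" for u v u' v' :: 'a
    by (simp add: algebra_simps)
  then show "econg p l x x' \<Longrightarrow> econg p l y y' \<Longrightarrow> econg p l (x - y) (x' - y')"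
    unfolding econg_def fst_diff snd_diff by (simp only:) (blast intro: dvd_diff)
qed

lemma dvd_mult_diff: "q dvd a - a' \<Longrightarrow> q dvd b - b' \<Longrightarrow> q dvd a * b - a' * (b'::'a::comm_ring_1)"
  using dvd_add[OF dvd_mult[of q "b - b'" a] dvd_mult2[of q "a - a'" b']]
  by (simp add: algebra_simps)

lemma econg_emul: "econg p l x x' \<Longrightarrow> econg p l y y' \<Longrightarrow> econg p l (emul d x y) (emul d x' y')"
  unfolding econg_def emul_def
  by (simp add: add_diff_add right_diff_distrib[symmetric] dvd_add dvd_mult dvd_mult_diff)

lemma econg_econj: "econg p l x x' \<Longrightarrow> econg p l (econj x) (econj x')"
  unfolding econg_def econj_def by (simp add: dvd_diff_swap)

lemma mem_ecls: "y \<in> ecls p l x \<longleftrightarrow> econg p l x y"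
  by (simp add: ecls_def)

lemma ecls_eq_iff: "ecls p l x = ecls p l y \<longleftrightarrow> econg p l x y"
  unfolding ecls_def by (auto intro: econg_trans econg_sym)

lemma UN_ecls_const:
  assumes "\<And>x'. econg p l x x' \<Longrightarrow> F x' = C"
  shows "(\<Union>x'\<in>ecls p l x. F x') = C"
proof -
  have "(\<Union>x'\<in>ecls p l x. F x') = (\<Union>x'\<in>ecls p l x. C)"
    using assms by (simp add: mem_ecls)
  also have "\<dots> = C"
    using mem_ecls[of x p l x] by auto
  finally show ?thesis .
qed

lemma qadd_ecls [simp]: "qadd p l (ecls p l x) (ecls p l y) = ecls p l (x + y)"
  unfolding qadd_def
  by (intro UN_ecls_const) (simp add: ecls_eq_iff econg_sym econg_add)

lemma qmul_ecls [simp]: "qmul d p l (ecls p l x) (ecls p l y) = ecls p l (emul d x y)"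
  unfolding qmul_def
  by (intro UN_ecls_const) (simp add: ecls_eq_iff econg_sym econg_emul)

lemma qconj_ecls [simp]: "qconj p l (ecls p l x) = ecls p l (econj x)"
  unfolding qconj_def
  by (intro UN_ecls_const) (simp add: ecls_eq_iff econg_sym econg_econj)

lemma emul_comm: "emul d x y = emul d y x"
  by (simp add: emul_def algebra_simps)

lemma emul_assoc: "emul d (emul d x y) z = emul d x (emul d y z)"
  by (simp add: emul_def algebra_simps)

lemma emul_unit [simp]: "emul d (1, 0) x = x" "emul d x (1, 0) = x"
  by (simp_all add: emul_def)

lemma emul_zero [simp]: "emul d (0, 0) x = (0, 0)" "emul d x (0, 0) = (0, 0)"
  by (simp_all add: emul_def)

lemma econg_right_unit: "econg p l (emul d y y') (1, 0) \<Longrightarrow> econg p l (emul d x (emul d y y')) x"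
  using econg_emul[OF econg_refl, of p l "emul d y y'" "(1, 0)" d x] by simp

lemma zero_pair_add [simp]: "(0, 0) + x = x" "x + (0, 0) = x" for x :: "'a::monoid_add \<times> 'b::monoid_add"
  by (simp_all add: zero_prod_def[symmetric])

lemma econj_real [simp]: "econj (a, 0) = (a, 0)"
  by (simp add: econj_def)

definition in_R :: "bool \<Rightarrow> 'a::zero ext \<Rightarrow> bool"
  where "in_R u x \<longleftrightarrow> u \<or> snd x = 0"

lemma in_R_intros [simp]:
  "in_R u (a, 0)" "in_R True x"
  "in_R u x \<Longrightarrow> in_R u y \<Longrightarrow> in_R u (x + y)"
  "in_R u x \<Longrightarrow> in_R u (- x)"
  "in_R u x \<Longrightarrow> in_R u y \<Longrightarrow> in_R u (emul d x y)"
  "in_R u x \<Longrightarrow> in_R u (econj x)"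
  by (auto simp: in_R_def emul_def econj_def)

lemma Rl_iff: "X \<in> Rl p l u \<longleftrightarrow> X \<in> ecls p l ` {x. in_R u x}"
  by (auto simp: Rl_def bigO_def smallo_def in_R_def image_iff)

lemma ecls_in_qunits:
  assumes "in_R u x" "in_R u y" "econg p l (emul d x y) (1, 0)"
  shows "ecls p l x \<in> qunits d p l (Rl p l u)"
proof -
  have "ecls p l x \<in> Rl p l u" "ecls p l y \<in> Rl p l u"
    using assms(1,2) by (auto simp: Rl_iff)
  moreover have "qmul d p l (ecls p l x) (ecls p l y) = qone p l"
    using assms(3) by (simp add: qone_def ecls_eq_iff)
  ultimately show ?thesis unfolding qunits_def by blast
qed

lemma is_char_ecls_mult:
  assumes "is_char d p l R \<chi>" "ecls p l x \<in> qunits d p l R" "ecls p l y \<in> qunits d p l R"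
  shows "\<chi> (ecls p l (emul d x y)) = \<chi> (ecls p l x) * \<chi> (ecls p l y)"
  using assms unfolding is_char_def by (metis qmul_ecls)

lemma is_char_one:
  assumes "is_char d p l (Rl p l u) \<chi>"
  shows "\<chi> (ecls p l (1, 0)) = 1"
proof -
  have one: "ecls p l (1, 0) \<in> qunits d p l (Rl p l u)"
    by (rule ecls_in_qunits[of u _ "(1, 0)"]) simp_all
  then have "\<chi> (ecls p l (1, 0)) = \<chi> (ecls p l (1, 0)) * \<chi> (ecls p l (1, 0))"
    using is_char_ecls_mult[OF assms one one] by simp
  moreover have "\<chi> (ecls p l (1, 0)) \<noteq> 0"
    using assms one by (simp add: is_char_def)
  ultimately show ?thesis by simp
qed

lemma is_char_inverse_pair:
  assumes "is_char d p l (Rl p l u) \<chi>" and "econg p l (emul d w w') (1, 0)"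
    and "ecls p l w \<in> qunits d p l (Rl p l u)" "ecls p l w' \<in> qunits d p l (Rl p l u)"
  shows "\<chi> (ecls p l w) * \<chi> (ecls p l w') = 1"
proof -
  have "ecls p l (emul d w w') = ecls p l (1, 0)"
    using assms(2) by (simp only: ecls_eq_iff)
  then show ?thesis
    using is_char_ecls_mult[OF assms(1,3,4)] is_char_one[OF assms(1)] by simp
qed

lemma top_power_shift:
  fixes p :: "'a::comm_ring_1"
  assumes "1 \<le> l" and "p dvd E - 1"
  shows "econg p l (E + p ^ (l - 1) * a, 0) (emul d (E, 0) (1 + p ^ (l - 1) * a, 0))"
proof -
  have "p ^ l = p * p ^ (l - 1)"
    using assms(1) by (cases l) simp_all
  then have "p ^ l dvd (E - 1) * (p ^ (l - 1) * a)"
    using mult_dvd_mono[OF assms(2) dvd_triv_left] by simp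
  moreover have "E + p ^ (l - 1) * a - E * (1 + p ^ (l - 1) * a) = - ((E - 1) * (p ^ (l - 1) * a))"
    by (simp add: algebra_simps)
  ultimately show ?thesis
    by (simp add: econg_def emul_def)
qed

lemma top_power_inverse_pair:
  fixes p :: "'a::comm_ring_1"
  assumes "2 \<le> l"
  shows "econg p l (emul d (1 + p ^ (l - 1) * a, 0) (1 - p ^ (l - 1) * a, 0)) (1, 0)"
proof -
  have "p ^ l dvd p ^ (l - 1) * p ^ (l - 1)"
    using assms by (simp add: le_imp_power_dvd power_add[symmetric])
  then have "p ^ l dvd (p ^ (l - 1) * a) * (p ^ (l - 1) * a)"
    using dvd_mult2[of "p ^ l" "p ^ (l - 1) * p ^ (l - 1)" "a * a"] by (simp add: algebra_simps)
  then show ?thesis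
    by (simp add: econg_def emul_def algebra_simps)
qed

lemma finite_bigO:
  fixes p :: "'a::idom"
  assumes "finite (residue_field p)"
  shows "finite (bigO p l)"
proof -
  obtain S where S: "finite S" "\<And>x. \<exists>r\<in>S. p ^ l dvd x - r"
    using finite_reps_mod_power[OF assms] by blast
  have "bigO p l \<subseteq> ecls p l ` (S \<times> S)"
  proof
    fix X assume "X \<in> bigO p l"
    then obtain x where X: "X = ecls p l x" by (auto simp: bigO_def)
    obtain r s where "r \<in> S" "s \<in> S" "p ^ l dvd fst x - r" "p ^ l dvd snd x - s"
      using S(2) by meson
    then show "X \<in> ecls p l ` (S \<times> S)"
      unfolding X by (intro image_eqI[of _ _ "(r, s)"]) (simp_all add: ecls_eq_iff econg_def)
  qed
  then show ?thesis by (rule finite_surj[OF finite_cartesian_product[OF S(1) S(1)]])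
qed

section \<open>The groups \<open>G(o\<^sub>\<ell>) \<supseteq> B(o\<^sub>\<ell>) \<supseteq> B\<^sup>i\<close>\<close>

definition cmat :: "'a::comm_ring_1 \<Rightarrow> nat \<Rightarrow> 'a ext \<Rightarrow> 'a ext \<Rightarrow> 'a ext \<Rightarrow> 'a ext \<Rightarrow> 'a mat"
  where "cmat p l a b c e = (ecls p l a, ecls p l b, ecls p l c, ecls p l e)"

lemma cmat_eq_iff:
  "cmat p l a b c e = cmat p l a' b' c' e' \<longleftrightarrow>
     econg p l a a' \<and> econg p l b b' \<and> econg p l c c' \<and> econg p l e e'"
  by (simp add: cmat_def ecls_eq_iff)

lemma mmul_cmat [simp]:
  "mmul d p l (cmat p l a b c e) (cmat p l a' b' c' e') =
     cmat p l (emul d a a' + emul d b c') (emul d a b' + emul d b e')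
              (emul d c a' + emul d e c') (emul d c b' + emul d e e')"
  by (simp add: mmul_def cmat_def)

lemma mone_cmat: "mone p l = cmat p l (1, 0) (0, 0) (0, 0) (1, 0)"
  by (simp add: mone_def cmat_def qone_def qzero_def)

lemma mstar_cmat [simp]:
  "mstar d p l (cmat p l a b c e) = cmat p l (econj e) (econj b) (econj c) (econj a)"
proof -
  have "Wmat p l = cmat p l (0, 0) (1, 0) (1, 0) (0, 0)"
    by (simp add: Wmat_def cmat_def qone_def qzero_def)
  moreover have "ctrans p l (cmat p l a b c e) = cmat p l (econj a) (econj c) (econj b) (econj e)"
    by (simp add: ctrans_def cmat_def)
  ultimately show ?thesis
    by (simp add: mstar_def emul_def plus_prod_def)
qed

lemma mats_bigO_iff: "A \<in> mats (bigO p l) \<longleftrightarrow> (\<exists>a b c e. A = cmat p l a b c e)"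
proof -
  obtain X1 X2 X3 X4 where "A = (X1, X2, X3, X4)" by (cases A)
  then show ?thesis by (simp add: mats_def cmat_def bigO_def image_iff)
qed

lemma cmat_mats_bigO [simp]: "cmat p l a b c e \<in> mats (bigO p l)"
  unfolding mats_bigO_iff by blast

lemma mats_Rl_iff:
  "A \<in> mats (Rl p l u) \<longleftrightarrow>
     (\<exists>a b c e. in_R u a \<and> in_R u b \<and> in_R u c \<and> in_R u e \<and> A = cmat p l a b c e)"
proof -
  obtain X1 X2 X3 X4 where "A = (X1, X2, X3, X4)" by (cases A)
  then show ?thesis by (simp add: mats_def cmat_def Rl_iff image_iff) blast
qed

lemma cmat_in_mats_Rl:
  "in_R u a \<Longrightarrow> in_R u b \<Longrightarrow> in_R u c \<Longrightarrow> in_R u e \<Longrightarrow> cmat p l a b c e \<in> mats (Rl p l u)"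
  by (auto simp: mats_def cmat_def Rl_iff)

lemma mats_Rl_bigO: "A \<in> mats (Rl p l u) \<Longrightarrow> A \<in> mats (bigO p l)"
  unfolding mats_Rl_iff mats_bigO_iff by blast

lemma mmul_assoc:
  "A \<in> mats (bigO p l) \<Longrightarrow> B \<in> mats (bigO p l) \<Longrightarrow> C \<in> mats (bigO p l) \<Longrightarrow>
     mmul d p l (mmul d p l A B) C = mmul d p l A (mmul d p l B C)"
  by (auto simp: mats_bigO_iff emul_def algebra_simps)

lemma mone_mmul [simp]: "A \<in> mats (bigO p l) \<Longrightarrow> mmul d p l (mone p l) A = A"
  by (auto simp: mats_bigO_iff mone_cmat)

lemma mmul_mone [simp]: "A \<in> mats (bigO p l) \<Longrightarrow> mmul d p l A (mone p l) = A"
  by (auto simp: mats_bigO_iff mone_cmat)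

lemma mstar_mmul:
  "A \<in> mats (bigO p l) \<Longrightarrow> B \<in> mats (bigO p l) \<Longrightarrow>
     mstar d p l (mmul d p l A B) = mmul d p l (mstar d p l B) (mstar d p l A)"
  by (auto simp: mats_bigO_iff emul_def econj_def algebra_simps)

lemma mmul_mats_Rl:
  "A \<in> mats (Rl p l u) \<Longrightarrow> B \<in> mats (Rl p l u) \<Longrightarrow> mmul d p l A B \<in> mats (Rl p l u)"
  by (auto simp: mats_Rl_iff[of A] mats_Rl_iff[of B] intro!: cmat_in_mats_Rl)

lemma mone_mats_Rl: "mone p l \<in> mats (Rl p l u)"
  by (simp add: mone_cmat cmat_in_mats_Rl)

lemma mstar_mats_Rl: "A \<in> mats (Rl p l u) \<Longrightarrow> mstar d p l A \<in> mats (Rl p l u)"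
  by (auto simp: mats_Rl_iff[of A] intro!: cmat_in_mats_Rl)

lemma mmul_mats_bigO: "A \<in> mats (bigO p l) \<Longrightarrow> B \<in> mats (bigO p l) \<Longrightarrow> mmul d p l A B \<in> mats (bigO p l)"
  by (metis mats_bigO_iff mmul_cmat)

lemma mstar_mats_bigO: "A \<in> mats (bigO p l) \<Longrightarrow> mstar d p l A \<in> mats (bigO p l)"
  by (metis mats_bigO_iff mstar_cmat)

lemma mstar_mstar: "A \<in> mats (bigO p l) \<Longrightarrow> mstar d p l (mstar d p l A) = A"
  by (auto simp: mats_bigO_iff econj_def)

definition matmon :: "'a::comm_ring_1 \<Rightarrow> 'a \<Rightarrow> nat \<Rightarrow> bool \<Rightarrow> 'a mat monoid"
  where "matmon d p l u = \<lparr>carrier = mats (Rl p l u), mult = mmul d p l, one = mone p l\<rparr>"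

lemma matmon_simps [simp]:
  "carrier (matmon d p l u) = mats (Rl p l u)" "mult (matmon d p l u) = mmul d p l" "one (matmon d p l u) = mone p l"
  by (simp_all add: matmon_def)

lemma monoid_matmon: "monoid (matmon d p l u)"
  unfolding matmon_def
  by unfold_locales (simp_all add: mmul_mats_Rl mone_mats_Rl mmul_assoc mats_Rl_bigO)

lemma Gl_eq: "Gl d p l u = {A \<in> Units (matmon d p l u). u \<longrightarrow> mmul d p l (mstar d p l A) A = mone p l}"
  by (auto simp: Gl_def Units_def matmon_def)

lemma Gl_mats_bigO: "A \<in> Gl d p l u \<Longrightarrow> A \<in> mats (bigO p l)"
  unfolding Gl_def by (blast intro: mats_Rl_bigO)

lemma unitary_mmul:
  assumes A: "A \<in> mats (bigO p l)" and B: "B \<in> mats (bigO p l)"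
    and "mmul d p l (mstar d p l A) A = mone p l" "mmul d p l (mstar d p l B) B = mone p l"
  shows "mmul d p l (mstar d p l (mmul d p l A B)) (mmul d p l A B) = mone p l"
proof -
  have "mmul d p l (mstar d p l (mmul d p l A B)) (mmul d p l A B)
      = mmul d p l (mstar d p l B) (mmul d p l (mmul d p l (mstar d p l A) A) B)"
    using A B by (simp add: mstar_mmul mmul_assoc mmul_mats_bigO mstar_mats_bigO)
  then show ?thesis using assms by simp
qed

lemma unitary_inv:
  assumes unit: "A \<in> Units (matmon d p l u)" and unitary: "mmul d p l (mstar d p l A) A = mone p l"
  shows "mmul d p l (mstar d p l (inv\<^bsub>matmon d p l u\<^esub> A)) (inv\<^bsub>matmon d p l u\<^esub> A) = mone p l"
proof -
  interpret M: monoid "matmon d p l u" by (rule monoid_matmon)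
  have A: "A \<in> carrier (matmon d p l u)" by (rule M.Units_closed[OF unit])
  have "mstar d p l A = inv\<^bsub>matmon d p l u\<^esub> A"
  proof (rule M.inv_unique[of _ A])
    show "mstar d p l A \<otimes>\<^bsub>matmon d p l u\<^esub> A = \<one>\<^bsub>matmon d p l u\<^esub>"
      using unitary by simp
    show "A \<otimes>\<^bsub>matmon d p l u\<^esub> inv\<^bsub>matmon d p l u\<^esub> A = \<one>\<^bsub>matmon d p l u\<^esub>"
      by (rule M.Units_r_inv[OF unit])
    show "mstar d p l A \<in> carrier (matmon d p l u)"
      using A by (simp add: mstar_mats_Rl)
  qed (use A M.Units_inv_closed[OF unit] in simp_all)
  then have "mstar d p l (inv\<^bsub>matmon d p l u\<^esub> A) = mstar d p l (mstar d p l A)"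
    by simp
  also have "\<dots> = A"
    using A by (simp add: mats_Rl_bigO mstar_mstar)
  finally show ?thesis
    using M.Units_r_inv[OF unit] by simp
qed

lemma subgroup_Gl: "subgroup (Gl d p l u) (units_of (matmon d p l u))"
proof -
  interpret M: monoid "matmon d p l u" by (rule monoid_matmon)
  interpret U: group "units_of (matmon d p l u)" by (rule M.units_group)
  show ?thesis
  proof (rule U.subgroupI)
    show "Gl d p l u \<subseteq> carrier (units_of (matmon d p l u))"
      by (auto simp: Gl_eq units_of_carrier)
    have "mone p l \<in> Gl d p l u"
      using M.Units_one_closed by (simp add: Gl_eq mone_cmat)
    then show "Gl d p l u \<noteq> {}" by blast
  next
    fix A assume A: "A \<in> Gl d p l u"
    then have unit: "A \<in> Units (matmon d p l u)" by (simp add: Gl_eq)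
    have "u \<longrightarrow> mmul d p l (mstar d p l (inv\<^bsub>matmon d p l u\<^esub> A)) (inv\<^bsub>matmon d p l u\<^esub> A) = mone p l"
      using unitary_inv[OF unit] A unfolding Gl_eq by blast
    then show "inv\<^bsub>units_of (matmon d p l u)\<^esub> A \<in> Gl d p l u"
      using M.Units_inv_Units[OF unit] by (simp add: Gl_eq M.units_of_inv[OF unit])
  next
    fix A B assume A: "A \<in> Gl d p l u" and B: "B \<in> Gl d p l u"
    have "A \<in> mats (bigO p l)" "B \<in> mats (bigO p l)"
      using Gl_mats_bigO[OF A] Gl_mats_bigO[OF B] .
    then have "u \<longrightarrow> mmul d p l (mstar d p l (mmul d p l A B)) (mmul d p l A B) = mone p l"
      using unitary_mmul A B unfolding Gl_eq by blast
    then show "A \<otimes>\<^bsub>units_of (matmon d p l u)\<^esub> B \<in> Gl d p l u"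
      using M.Units_m_closed[of A B] A B by (simp add: Gl_eq units_of_mult)
  qed
qed

definition Ggrp :: "'a::comm_ring_1 \<Rightarrow> 'a \<Rightarrow> nat \<Rightarrow> bool \<Rightarrow> 'a mat monoid"
  where "Ggrp d p l u = (units_of (matmon d p l u))\<lparr>carrier := Gl d p l u\<rparr>"

lemma Ggrp_simps [simp]:
  "carrier (Ggrp d p l u) = Gl d p l u" "mult (Ggrp d p l u) = mmul d p l" "one (Ggrp d p l u) = mone p l"
  by (simp_all add: Ggrp_def units_of_def)

lemma group_Ggrp: "group (Ggrp d p l u)"
  unfolding Ggrp_def
  by (rule subgroup.subgroup_is_group[OF subgroup_Gl monoid.units_group[OF monoid_matmon]])

lemma minv_eq_inv: "A \<in> Gl d p l u \<Longrightarrow> minv d p l (Rl p l u) A = inv\<^bsub>Ggrp d p l u\<^esub> A"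
proof -
  assume A: "A \<in> Gl d p l u"
  then have unit: "A \<in> Units (matmon d p l u)" by (simp add: Gl_eq)
  have "inv\<^bsub>Ggrp d p l u\<^esub> A = inv\<^bsub>units_of (matmon d p l u)\<^esub> A"
    unfolding Ggrp_def
    by (rule group.m_inv_consistent[OF monoid.units_group[OF monoid_matmon] subgroup_Gl A])
  also have "\<dots> = inv\<^bsub>matmon d p l u\<^esub> A"
    by (rule monoid.units_of_inv[OF monoid_matmon unit])
  finally show ?thesis by (simp add: minv_def m_inv_def)
qed

lemma Gl_mmul: "A \<in> Gl d p l u \<Longrightarrow> B \<in> Gl d p l u \<Longrightarrow> mmul d p l A B \<in> Gl d p l u"
  using monoid.m_closed[OF group.is_monoid[OF group_Ggrp]] by simp

lemma mmul_upper_triangular: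
  "mmul d p l (cmat p l a b (0, 0) e) (cmat p l a' b' (0, 0) e') =
     cmat p l (emul d a a') (emul d a b' + emul d b e') (0, 0) (emul d e e')"
  by simp

lemma Bor_iff: "A \<in> Bor d p l u \<longleftrightarrow> A \<in> Gl d p l u \<and> (\<exists>a b e. A = cmat p l a b (0, 0) e)"
proof -
  have "fst (snd (snd A)) = qzero p l \<longleftrightarrow> (\<exists>a b e. A = cmat p l a b (0, 0) e)" if G: "A \<in> Gl d p l u"
  proof -
    obtain a b c e where A: "A = cmat p l a b c e"
      using Gl_mats_bigO[OF G] mats_bigO_iff by blast
    show ?thesis
    proof
      assume "fst (snd (snd A)) = qzero p l"
      then have "A = cmat p l a b (0, 0) e" by (simp add: A cmat_def qzero_def)
      then show "\<exists>a b e. A = cmat p l a b (0, 0) e" by blast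
    qed (auto simp: cmat_def qzero_def)
  qed
  then show ?thesis unfolding Bor_def by blast
qed

lemma Bor_cmat_iff: "cmat p l a b c e \<in> Bor d p l u \<longleftrightarrow> cmat p l a b c e \<in> Gl d p l u \<and> econg p l c (0, 0)"
  by (simp add: Bor_def cmat_def qzero_def ecls_eq_iff econg_sym)

lemma Bor_mats_bigO: "A \<in> Bor d p l u \<Longrightarrow> A \<in> mats (bigO p l)"
  unfolding Bor_def using Gl_mats_bigO by blast

lemma Bor_rep:
  assumes "x \<in> Bor d p l u"
  shows "\<exists>\<alpha> \<beta> \<gamma>. in_R u \<alpha> \<and> in_R u \<beta> \<and> in_R u \<gamma> \<and> x = cmat p l \<alpha> \<beta> (0, 0) \<gamma>"
proof -
  obtain a b c e where R: "in_R u a" "in_R u b" "in_R u e" and x: "x = cmat p l a b c e"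
    using assms by (auto simp: Bor_def Gl_def mats_Rl_iff)
  then have "econg p l c (0, 0)"
    using assms by (simp add: Bor_cmat_iff)
  then have "x = cmat p l a b (0, 0) e"
    by (simp add: x cmat_eq_iff)
  then show ?thesis using R by blast
qed

lemma econg_zero_of_mult_unit:
  assumes "econg p l (emul d a' a) (1, 0)" and "econg p l (emul d c' a) (0, 0)"
  shows "econg p l c' (0, 0)"
proof -
  have "econg p l c' (emul d c' (emul d a' a))"
    using econg_emul[OF econg_refl econg_sym[OF assms(1)]] by simp
  also have "emul d c' (emul d a' a) = emul d (emul d c' a) a'"
    by (simp add: emul_def algebra_simps)
  finally show ?thesis
    using econg_trans econg_emul[OF assms(2) econg_refl, of d a'] by fastforce
qed

lemma subgroup_Bor: "subgroup (Bor d p l u) (Ggrp d p l u)"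
proof (rule group.subgroupI[OF group_Ggrp])
  show "Bor d p l u \<subseteq> carrier (Ggrp d p l u)" by (auto simp: Bor_iff)
  have "mone p l \<in> Gl d p l u"
    using monoid.one_closed[OF group.is_monoid[OF group_Ggrp]] by simp
  then have "mone p l \<in> Bor d p l u"
    unfolding Bor_iff mone_cmat by blast
  then show "Bor d p l u \<noteq> {}" by blast
next
  fix A B assume "A \<in> Bor d p l u" "B \<in> Bor d p l u"
  then obtain a b e a' b' e' where AG: "A \<in> Gl d p l u" and A: "A = cmat p l a b (0, 0) e"
    and BG: "B \<in> Gl d p l u" and B: "B = cmat p l a' b' (0, 0) e'"
    unfolding Bor_iff by blast
  have "mmul d p l A B \<in> Gl d p l u"
    by (rule Gl_mmul[OF AG BG])
  with A B show "A \<otimes>\<^bsub>Ggrp d p l u\<^esub> B \<in> Bor d p l u"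
    unfolding Bor_iff by (simp only: Ggrp_simps mmul_upper_triangular) blast
next
  interpret G: group "Ggrp d p l u" by (rule group_Ggrp)
  fix A assume "A \<in> Bor d p l u"
  then obtain a b e where A: "A = cmat p l a b (0, 0) e" and AG: "A \<in> Gl d p l u"
    by (auto simp: Bor_iff)
  define A1 where "A1 = inv\<^bsub>Ggrp d p l u\<^esub> A"
  have A1G: "A1 \<in> Gl d p l u" and inv: "mmul d p l A1 A = mone p l"
    using G.inv_closed G.l_inv AG by (simp_all add: A1_def)
  then obtain a' b' c' e' where A1: "A1 = cmat p l a' b' c' e'"
    using Gl_mats_bigO mats_bigO_iff by metis
  have "econg p l (emul d a' a) (1, 0)" "econg p l (emul d c' a) (0, 0)"
    using inv by (simp_all add: A1 A mone_cmat cmat_eq_iff)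
  then have "econg p l c' (0, 0)" by (rule econg_zero_of_mult_unit)
  then have "A1 = cmat p l a' b' (0, 0) e'"
    by (simp add: A1 cmat_eq_iff)
  then show "inv\<^bsub>Ggrp d p l u\<^esub> A \<in> Bor d p l u"
    using A1G unfolding Bor_iff A1_def by blast
qed

definition Bgrp :: "'a::comm_ring_1 \<Rightarrow> 'a \<Rightarrow> nat \<Rightarrow> bool \<Rightarrow> 'a mat monoid"
  where "Bgrp d p l u = (Ggrp d p l u)\<lparr>carrier := Bor d p l u\<rparr>"

lemma Bgrp_simps [simp]:
  "carrier (Bgrp d p l u) = Bor d p l u" "mult (Bgrp d p l u) = mmul d p l" "one (Bgrp d p l u) = mone p l"
  by (simp_all add: Bgrp_def)

lemma group_Bgrp: "group (Bgrp d p l u)"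
  unfolding Bgrp_def by (rule group.subgroup_imp_group[OF group_Ggrp subgroup_Bor])

lemma finite_Bor:
  fixes p :: "'a::idom"
  assumes "finite (residue_field p)"
  shows "finite (Bor d p l u)"
proof -
  have "Bor d p l u \<subseteq> mats (bigO p l)"
    using Gl_mats_bigO by (auto simp: Bor_def)
  moreover have "mats (bigO p l) = bigO p l \<times> bigO p l \<times> bigO p l \<times> bigO p l"
    by (auto simp: mats_def)
  ultimately show ?thesis using finite_bigO[OF assms] by (simp add: finite_subset)
qed

lemma Gl_diag_in_Rl:
  assumes "cmat p l a b c e \<in> Gl d p l u"
  shows "ecls p l a \<in> Rl p l u" "ecls p l e \<in> Rl p l u"
  using assms by (simp_all add: Gl_def mats_def cmat_def)

lemma Bor_diag_units:
  assumes x: "cmat p l a b (0, 0) e \<in> Bor d p l u"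
  shows "ecls p l a \<in> qunits d p l (Rl p l u)" "ecls p l e \<in> qunits d p l (Rl p l u)"
proof -
  interpret B: group "Bgrp d p l u" by (rule group_Bgrp)
  let ?x = "cmat p l a b (0, 0) e"
  have invB: "inv\<^bsub>Bgrp d p l u\<^esub> ?x \<in> Bor d p l u"
    using B.inv_closed[of ?x] x by simp
  then obtain a' b' e' where inv: "inv\<^bsub>Bgrp d p l u\<^esub> ?x = cmat p l a' b' (0, 0) e'"
    unfolding Bor_iff by blast
  have "mmul d p l ?x (inv\<^bsub>Bgrp d p l u\<^esub> ?x) = mone p l"
    using B.r_inv[of ?x] x by simp
  then have "qmul d p l (ecls p l a) (ecls p l a') = qone p l" "qmul d p l (ecls p l e) (ecls p l e') = qone p l"
    by (simp_all add: inv mone_cmat cmat_eq_iff qone_def ecls_eq_iff)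
  moreover have "ecls p l a \<in> Rl p l u" "ecls p l e \<in> Rl p l u" "ecls p l a' \<in> Rl p l u" "ecls p l e' \<in> Rl p l u"
    using x invB by (auto simp: inv Bor_def dest: Gl_diag_in_Rl)
  ultimately show "ecls p l a \<in> qunits d p l (Rl p l u)" "ecls p l e \<in> qunits d p l (Rl p l u)"
    unfolding qunits_def by blast+
qed

lemma diag_unit_in_Bor:
  assumes AE: "A * E = 1" and B: "in_R u B" "u \<Longrightarrow> econj B = - B"
  shows "cmat p l (A, 0) B (0, 0) (E, 0) \<in> Bor d p l u"
proof -
  let ?k = "cmat p l (A, 0) B (0, 0) (E, 0)" and ?k' = "cmat p l (E, 0) (- B) (0, 0) (A, 0)"
  have "?k \<in> mats (Rl p l u)" "?k' \<in> mats (Rl p l u)"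
    using B(1) by (simp_all add: cmat_in_mats_Rl)
  moreover have "mmul d p l ?k ?k' = mone p l" "mmul d p l ?k' ?k = mone p l"
    using AE by (simp_all add: mone_cmat emul_def mult.commute zero_prod_def)
  moreover have "mmul d p l (mstar d p l ?k) ?k = mone p l" if u
    using AE B(2)[OF that] by (simp add: mone_cmat emul_def mult.commute zero_prod_def)
  ultimately show ?thesis
    unfolding Bor_cmat_iff Gl_def using econg_refl by blast
qed

lemma unitary_upper_relations:
  assumes "cmat p l \<alpha> \<beta> (0, 0) \<gamma> \<in> Bor d p l True"
  shows "econg p l (emul d (econj \<gamma>) \<alpha>) (1, 0)" "econg p l (emul d (econj \<alpha>) \<gamma>) (1, 0)"
    "econg p l (emul d (econj \<gamma>) \<beta> + emul d (econj \<beta>) \<gamma>) (0, 0)"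
proof -
  have "mmul d p l (mstar d p l (cmat p l \<alpha> \<beta> (0, 0) \<gamma>)) (cmat p l \<alpha> \<beta> (0, 0) \<gamma>) = mone p l"
    using assms by (simp add: Bor_def Gl_def)
  then show "econg p l (emul d (econj \<gamma>) \<alpha>) (1, 0)" "econg p l (emul d (econj \<alpha>) \<gamma>) (1, 0)"
    "econg p l (emul d (econj \<gamma>) \<beta> + emul d (econj \<beta>) \<gamma>) (0, 0)"
    by (simp_all add: mone_cmat cmat_eq_iff)
qed

lemma Bor_closed_under_conj:
  assumes x: "x \<in> Bor d p l u" and k: "k \<in> Bor d p l u" and k': "k' \<in> mats (bigO p l)"
    and comm: "mmul d p l x k = mmul d p l k' x"
  shows "k' \<in> Bor d p l u"
proof -
  interpret B: group "Bgrp d p l u" by (rule group_Bgrp)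
  let ?xi = "inv\<^bsub>Bgrp d p l u\<^esub> x"
  have xi: "?xi \<in> Bor d p l u" "mmul d p l x ?xi = mone p l"
    using B.inv_closed[of x] B.r_inv[of x] x by simp_all
  have bigO: "x \<in> mats (bigO p l)" "?xi \<in> mats (bigO p l)"
    using x xi(1) by (simp_all add: Bor_mats_bigO)
  have "k' = mmul d p l (mmul d p l k' x) ?xi"
    using xi(2) bigO k' by (simp add: mmul_assoc)
  also have "\<dots> = mmul d p l (mmul d p l x k) ?xi"
    by (simp add: comm)
  finally show ?thesis
    using B.m_closed[of "mmul d p l x k" ?xi] B.m_closed[of x k] x k xi(1) by simp
qed

definition tau :: "'a::comm_ring_1 \<Rightarrow> 'a \<Rightarrow> bool \<Rightarrow> nat \<Rightarrow> 'a ext"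
  where "tau d p u i = emul d (epsi u) (p ^ i, 0)"

lemma tau_simps [simp]: "tau d p False i = (p ^ i, 0)" "tau d p True i = (0, p ^ i)"
  by (simp_all add: tau_def epsi_def emul_def)

lemma in_R_tau [simp]: "in_R u (tau d p u i)"
  by (cases u) simp_all

lemma tau_solvable:
  assumes "d * d' = 1"
  shows "\<exists>B. in_R u B \<and> (u \<longrightarrow> econj B = - B) \<and> emul d (tau d p u i) B = (p ^ i * s, 0)"
proof (cases u)
  case True
  have "d * (p ^ i * (d' * s)) = (d * d') * (p ^ i * s)"
    by (simp only: ac_simps)
  then have "emul d (tau d p u i) (0, d' * s) = (p ^ i * s, 0)"
    using True assms by (simp add: emul_def)
  then show ?thesis
    using True by (intro exI[of _ "(0, d' * s)"]) (simp add: econj_def)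
qed (intro exI[of _ "(s, 0)"], simp add: emul_def)

lemma tau_annihilates:
  assumes "1 \<le> i" "1 \<le> l"
  shows "econg p l (emul d (tau d p u i) (p ^ (l - 1) * a, 0)) (0, 0)"
proof -
  have "p ^ l dvd p ^ i * (p ^ (l - 1) * a)"
    using assms by (simp add: mult.assoc[symmetric] power_add[symmetric] le_imp_power_dvd)
  then show ?thesis by (cases u) (simp_all add: econg_def emul_def)
qed

lemma gmat_cmat: "gmat d p l u i = cmat p l (1, 0) (0, 0) (tau d p u i) (1, 0)"
  by (simp add: gmat_def cmat_def qone_def qzero_def tau_def)

lemma lower_unipotent_Gl:
  assumes "in_R u t" and "u \<Longrightarrow> econj t = - t"
  shows "cmat p l (1, 0) (0, 0) t (1, 0) \<in> Gl d p l u"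
proof -
  let ?g = "cmat p l (1, 0) (0, 0) t (1, 0)" and ?g' = "cmat p l (1, 0) (0, 0) (- t) (1, 0)"
  have "?g \<in> mats (Rl p l u)" "?g' \<in> mats (Rl p l u)"
    using assms(1) by (simp_all add: cmat_in_mats_Rl)
  moreover have "mmul d p l ?g ?g' = mone p l" "mmul d p l ?g' ?g = mone p l"
    by (simp_all add: mone_cmat zero_prod_def)
  moreover have "mmul d p l (mstar d p l ?g) ?g = mone p l" if u
    using assms(2)[OF that] by (simp add: mone_cmat zero_prod_def)
  ultimately show ?thesis unfolding Gl_def by blast
qed

lemma gmat_Gl: "gmat d p l u i \<in> Gl d p l u"
  unfolding gmat_cmat by (rule lower_unipotent_Gl) (simp_all add: econj_def)

lemma inv_gmat: "inv\<^bsub>Ggrp d p l u\<^esub> (gmat d p l u i) = cmat p l (1, 0) (0, 0) (- tau d p u i) (1, 0)"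
proof (rule group.inv_equality[OF group_Ggrp])
  show "cmat p l (1, 0) (0, 0) (- tau d p u i) (1, 0) \<in> carrier (Ggrp d p l u)"
    by (cases u) (auto intro!: lower_unipotent_Gl simp: econj_def)
  show "gmat d p l u i \<in> carrier (Ggrp d p l u)" by (simp add: gmat_Gl)
qed (simp add: gmat_cmat mone_cmat zero_prod_def)

lemma inv_gmat_Gl: "inv\<^bsub>Ggrp d p l u\<^esub> (gmat d p l u i) \<in> Gl d p l u"
  unfolding inv_gmat by (cases u) (auto intro!: lower_unipotent_Gl simp: econj_def)

lemma Bsub_eq_conj:
  "Bsub d p l u i = Bor d p l u \<inter> (gmat d p l u i <#\<^bsub>Ggrp d p l u\<^esub> Bor d p l u #>\<^bsub>Ggrp d p l u\<^esub> inv\<^bsub>Ggrp d p l u\<^esub> gmat d p l u i)"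
proof -
  interpret G: group "Ggrp d p l u" by (rule group_Ggrp)
  have "mmul d p l (gmat d p l u i) (mmul d p l y (inv\<^bsub>Ggrp d p l u\<^esub> gmat d p l u i)) =
      mmul d p l (mmul d p l (gmat d p l u i) y) (inv\<^bsub>Ggrp d p l u\<^esub> gmat d p l u i)"
    if "y \<in> Bor d p l u" for y
  proof -
    have g: "gmat d p l u i \<in> carrier (Ggrp d p l u)" and y: "y \<in> carrier (Ggrp d p l u)"
      using that by (simp_all add: gmat_Gl Bor_def)
    show ?thesis using G.m_assoc[OF g y G.inv_closed[OF g]] by simp
  qed
  then show ?thesis
    unfolding Bsub_def minv_eq_inv[OF gmat_Gl] l_coset_def r_coset_def by auto
qed

lemma subgroup_Bsub: "subgroup (Bsub d p l u i) (Bgrp d p l u)"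
proof -
  interpret G: group "Ggrp d p l u" by (rule group_Ggrp)
  have g: "gmat d p l u i \<in> carrier (Ggrp d p l u)" by (simp add: gmat_Gl)
  have "subgroup (Bsub d p l u i) (Ggrp d p l u)"
    unfolding Bsub_eq_conj
    by (intro G.subgroups_Inter_pair subgroup_Bor G.subgroup_conjugation_is_surj2[OF g])
  then show ?thesis
    unfolding Bgrp_def by (rule G.subgroup_incl[OF _ subgroup_Bor]) (auto simp: Bsub_def)
qed

lemma conj_lower_unipotent:
  "mmul d p l (cmat p l (1, 0) (0, 0) (- t) (1, 0)) (mmul d p l (cmat p l a b c e) (cmat p l (1, 0) (0, 0) t (1, 0))) =
     cmat p l (a + emul d b t) b (c + emul d e t - emul d t (a + emul d b t)) (e - emul d t b)"
  by (simp add: emul_def plus_prod_def minus_prod_def uminus_prod_def algebra_simps)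

lemma Bsub_iff_conj_Bor:
  "x \<in> Bsub d p l u i \<longleftrightarrow> x \<in> Bor d p l u \<and>
     mmul d p l (inv\<^bsub>Ggrp d p l u\<^esub> gmat d p l u i) (mmul d p l x (gmat d p l u i)) \<in> Bor d p l u"
proof -
  interpret G: group "Ggrp d p l u" by (rule group_Ggrp)
  have g: "gmat d p l u i \<in> carrier (Ggrp d p l u)" by (simp add: gmat_Gl)
  show ?thesis
    unfolding Bsub_eq_conj using G.mem_conj_coset_iff[OF subgroup.subset[OF subgroup_Bor] g, of x]
    by (auto simp: Bor_def)
qed

lemma Bsub_cmat_iff:
  assumes x: "cmat p l a b (0, 0) e \<in> Bor d p l u"
  shows "cmat p l a b (0, 0) e \<in> Bsub d p l u i \<longleftrightarrow>
           econg p l (emul d (tau d p u i) (a - e + emul d (tau d p u i) b)) (0, 0)"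
proof -
  let ?t = "tau d p u i" and ?x = "cmat p l a b (0, 0) e"
  let ?y = "mmul d p l (inv\<^bsub>Ggrp d p l u\<^esub> gmat d p l u i) (mmul d p l ?x (gmat d p l u i))"
  have "?y \<in> Gl d p l u"
    using x by (simp add: Bor_def Gl_mmul gmat_Gl inv_gmat_Gl)
  moreover have "?y = cmat p l (a + emul d b ?t) b ((0, 0) + emul d e ?t - emul d ?t (a + emul d b ?t)) (e - emul d ?t b)"
    unfolding inv_gmat unfolding gmat_cmat by (rule conj_lower_unipotent)
  moreover have "(0, 0) + emul d e ?t - emul d ?t (a + emul d b ?t) = - emul d ?t (a - e + emul d ?t b)"
    by (simp add: emul_def algebra_simps)
  ultimately show ?thesis
    using x by (simp add: Bsub_iff_conj_Bor Bor_cmat_iff econg_def)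
qed

section \<open>The character of \<open>B\<^sup>i\<close> to be induced\<close>

lemma pchar_cmat: "pchar \<chi> \<chi>' (cmat p l a b c e) = \<chi> (ecls p l a) * \<chi>' (ecls p l e)"
  by (simp add: pchar_def cmat_def)

lemma pchar_mult:
  assumes "is_char d p l (Rl p l u) \<chi>" "is_char d p l (Rl p l u) \<chi>'"
    and "x \<in> Bor d p l u" "y \<in> Bor d p l u"
  shows "pchar \<chi> \<chi>' (mmul d p l x y) = pchar \<chi> \<chi>' x * pchar \<chi> \<chi>' y"
proof -
  obtain a b e a' b' e' where x: "x = cmat p l a b (0, 0) e" and y: "y = cmat p l a' b' (0, 0) e'"
    using assms(3,4) unfolding Bor_iff by blast
  show ?thesis
    using assms Bor_diag_units[of p l a b e] Bor_diag_units[of p l a' b' e']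
    by (simp add: x y pchar_cmat is_char_ecls_mult)
qed

lemma pchar_nonzero:
  assumes "is_char d p l (Rl p l u) \<chi>" "is_char d p l (Rl p l u) \<chi>'" and "x \<in> Bor d p l u"
  shows "pchar \<chi> \<chi>' x \<noteq> 0"
proof -
  obtain a b e where x: "x = cmat p l a b (0, 0) e"
    using assms(3) unfolding Bor_iff by blast
  show ?thesis
    using assms Bor_diag_units[of p l a b e] by (simp add: x pchar_cmat is_char_def)
qed

definition twisted_char ::
  "('a cl \<Rightarrow> complex) \<Rightarrow> ('a cl \<Rightarrow> complex) \<Rightarrow> ('a cl \<Rightarrow> complex) \<Rightarrow> ('a cl \<Rightarrow> complex) \<Rightarrow>
   'a::comm_ring_1 \<Rightarrow> 'a \<Rightarrow> nat \<Rightarrow> bool \<Rightarrow> nat \<Rightarrow> 'a mat \<Rightarrow> complex"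
  where "twisted_char \<chi>1 \<chi>2 \<chi>3 \<chi>4 d p l u i x = pchar \<chi>1 \<chi>2 x *
    pchar \<chi>3 \<chi>4 (mmul d p l (minv d p l (Rl p l u) (gmat d p l u i)) (mmul d p l x (gmat d p l u i)))"

lemma twisted_char_cmat:
  "twisted_char \<chi>1 \<chi>2 \<chi>3 \<chi>4 d p l u i (cmat p l a b c e) =
     \<chi>1 (ecls p l a) * \<chi>2 (ecls p l e) *
     (\<chi>3 (ecls p l (a + emul d (tau d p u i) b)) * \<chi>4 (ecls p l (e - emul d (tau d p u i) b)))"
  unfolding twisted_char_def minv_eq_inv[OF gmat_Gl] inv_gmat
  unfolding gmat_cmat conj_lower_unipotent by (simp add: pchar_cmat emul_comm)

lemma twisted_char_mult:
  assumes "is_char d p l (Rl p l u) \<chi>1" "is_char d p l (Rl p l u) \<chi>2"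
    "is_char d p l (Rl p l u) \<chi>3" "is_char d p l (Rl p l u) \<chi>4"
    and x: "x \<in> Bsub d p l u i" and y: "y \<in> Bsub d p l u i"
  shows "twisted_char \<chi>1 \<chi>2 \<chi>3 \<chi>4 d p l u i (mmul d p l x y) =
           twisted_char \<chi>1 \<chi>2 \<chi>3 \<chi>4 d p l u i x * twisted_char \<chi>1 \<chi>2 \<chi>3 \<chi>4 d p l u i y"
proof -
  interpret G: group "Ggrp d p l u" by (rule group_Ggrp)
  let ?g = "gmat d p l u i"
  let ?c = "\<lambda>z. mmul d p l (inv\<^bsub>Ggrp d p l u\<^esub> ?g) (mmul d p l z ?g)"
  have B: "x \<in> Bor d p l u" "?c x \<in> Bor d p l u" "y \<in> Bor d p l u" "?c y \<in> Bor d p l u"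
    using x y by (simp_all add: Bsub_iff_conj_Bor)
  moreover have "?g \<in> carrier (Ggrp d p l u)" by (simp add: gmat_Gl)
  ultimately have "?c (mmul d p l x y) = mmul d p l (?c x) (?c y)"
    using G.conj_mult[of ?g x y] by (simp add: Bor_def)
  then show ?thesis
    using B assms(1-4) by (simp add: twisted_char_def minv_eq_inv[OF gmat_Gl] pchar_mult)
qed

lemma twisted_char_nonzero:
  assumes "is_char d p l (Rl p l u) \<chi>1" "is_char d p l (Rl p l u) \<chi>2"
    "is_char d p l (Rl p l u) \<chi>3" "is_char d p l (Rl p l u) \<chi>4"
    and x: "x \<in> Bsub d p l u i"
  shows "twisted_char \<chi>1 \<chi>2 \<chi>3 \<chi>4 d p l u i x \<noteq> 0"
  using x assms(1-4) by (simp add: twisted_char_def minv_eq_inv[OF gmat_Gl] Bsub_iff_conj_Bor pchar_nonzero)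

section \<open>Mackey's condition for \<open>B\<^sup>i\<close>\<close>

lemma char_pair_perturbed:
  fixes p :: "'a::comm_ring_1"
  assumes c3: "is_char d p l (Rl p l u) \<chi>3" and c4: "is_char d p l (Rl p l u) \<chi>4"
    and l: "2 \<le> l"
    and ss: "\<chi>3 (ecls p l (1 + p ^ (l - 1) * a, 0)) * inverse (\<chi>4 (ecls p l (1 + p ^ (l - 1) * a, 0))) \<noteq> 1"
    and E: "ecls p l (E, 0) \<in> qunits d p l (Rl p l u)" "p dvd E - 1"
    and A: "ecls p l (A, 0) \<in> qunits d p l (Rl p l u)" "p dvd A - 1"
  shows "\<chi>3 (ecls p l (E + p ^ (l - 1) * a, 0)) * \<chi>4 (ecls p l (A - p ^ (l - 1) * a, 0)) \<noteq>
           \<chi>3 (ecls p l (E, 0)) * \<chi>4 (ecls p l (A, 0))"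
proof
  let ?w = "(1 + p ^ (l - 1) * a, 0)" and ?w' = "(1 - p ^ (l - 1) * a, 0)"
  have ww: "econg p l (emul d ?w ?w') (1, 0)"
    using l by (rule top_power_inverse_pair)
  then have w: "ecls p l ?w \<in> qunits d p l (Rl p l u)" "ecls p l ?w' \<in> qunits d p l (Rl p l u)"
    using ecls_in_qunits[of u ?w ?w'] ecls_in_qunits[of u ?w' ?w] by (simp_all add: emul_comm)
  have "ecls p l (E + p ^ (l - 1) * a, 0) = ecls p l (emul d (E, 0) ?w)"
    "ecls p l (A - p ^ (l - 1) * a, 0) = ecls p l (emul d (A, 0) ?w')"
    using top_power_shift[OF _ E(2), of l a d] top_power_shift[OF _ A(2), of l "- a" d] l
    by (simp_all add: ecls_eq_iff)
  then have split: "\<chi>3 (ecls p l (E + p ^ (l - 1) * a, 0)) * \<chi>4 (ecls p l (A - p ^ (l - 1) * a, 0)) =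
      \<chi>3 (ecls p l (E, 0)) * \<chi>4 (ecls p l (A, 0)) * (\<chi>3 (ecls p l ?w) * \<chi>4 (ecls p l ?w'))"
    using is_char_ecls_mult[OF c3 E(1) w(1)] is_char_ecls_mult[OF c4 A(1) w(2)] by simp
  assume "\<chi>3 (ecls p l (E + p ^ (l - 1) * a, 0)) * \<chi>4 (ecls p l (A - p ^ (l - 1) * a, 0)) =
    \<chi>3 (ecls p l (E, 0)) * \<chi>4 (ecls p l (A, 0))"
  then have "\<chi>3 (ecls p l ?w) * \<chi>4 (ecls p l ?w') = 1"
    using split c3 c4 E(1) A(1) by (simp add: is_char_def)
  also have "\<dots> = \<chi>4 (ecls p l ?w) * \<chi>4 (ecls p l ?w')"
    using is_char_inverse_pair[OF c4 ww w] by simp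
  finally have "\<chi>3 (ecls p l ?w) = \<chi>4 (ecls p l ?w)"
    using c4 w(2) by (simp add: is_char_def)
  moreover have "\<chi>4 (ecls p l ?w) \<noteq> 0"
    using c4 w(1) by (simp add: is_char_def)
  ultimately show False
    using ss by simp
qed

lemma twisted_char_perturbed_ne:
  assumes c1: "is_char d p l (Rl p l u) \<chi>1" and c2: "is_char d p l (Rl p l u) \<chi>2"
    and c3: "is_char d p l (Rl p l u) \<chi>3" and c4: "is_char d p l (Rl p l u) \<chi>4"
    and l: "2 \<le> l"
    and ss: "\<chi>3 (ecls p l (1 + p ^ (l - 1) * a, 0)) * inverse (\<chi>4 (ecls p l (1 + p ^ (l - 1) * a, 0))) \<noteq> 1"
    and k: "cmat p l (A, 0) B (0, 0) (E, 0) \<in> Bor d p l u"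
    and tB: "emul d (tau d p u i) B = (E - A, 0)"
    and A1: "p dvd A - 1" and E1: "p dvd E - 1"
    and \<Delta>: "econg p l (emul d (tau d p u i) B' - (E - A, 0)) (p ^ (l - 1) * a, 0)"
  shows "twisted_char \<chi>1 \<chi>2 \<chi>3 \<chi>4 d p l u i (cmat p l (A, 0) B (0, 0) (E, 0)) \<noteq>
         twisted_char \<chi>1 \<chi>2 \<chi>3 \<chi>4 d p l u i (cmat p l (A, 0) B' (0, 0) (E, 0))"
proof -
  let ?t = "tau d p u i" and ?\<delta> = "p ^ (l - 1) * a"
  have "econg p l ((A, 0) + emul d ?t B') (E + ?\<delta>, 0)" "econg p l ((E, 0) - emul d ?t B') (A - ?\<delta>, 0)"
    using econg_add[OF econg_refl[of p l "(E, 0)"] \<Delta>] econg_diff[OF econg_refl[of p l "(A, 0)"] \<Delta>]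
    by (simp_all add: plus_prod_def minus_prod_def algebra_simps)
  then have "ecls p l ((A, 0) + emul d ?t B') = ecls p l (E + ?\<delta>, 0)"
    "ecls p l ((E, 0) - emul d ?t B') = ecls p l (A - ?\<delta>, 0)"
    by (simp_all only: ecls_eq_iff)
  then have val': "twisted_char \<chi>1 \<chi>2 \<chi>3 \<chi>4 d p l u i (cmat p l (A, 0) B' (0, 0) (E, 0)) =
      \<chi>1 (ecls p l (A, 0)) * \<chi>2 (ecls p l (E, 0)) * (\<chi>3 (ecls p l (E + ?\<delta>, 0)) * \<chi>4 (ecls p l (A - ?\<delta>, 0)))"
    by (simp add: twisted_char_cmat)
  have val: "twisted_char \<chi>1 \<chi>2 \<chi>3 \<chi>4 d p l u i (cmat p l (A, 0) B (0, 0) (E, 0)) =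
      \<chi>1 (ecls p l (A, 0)) * \<chi>2 (ecls p l (E, 0)) * (\<chi>3 (ecls p l (E, 0)) * \<chi>4 (ecls p l (A, 0)))"
    using tB by (simp add: twisted_char_cmat)
  have "\<chi>1 (ecls p l (A, 0)) * \<chi>2 (ecls p l (E, 0)) \<noteq> 0"
    using c1 c2 Bor_diag_units[OF k] by (simp add: is_char_def)
  moreover have "\<chi>3 (ecls p l (E + ?\<delta>, 0)) * \<chi>4 (ecls p l (A - ?\<delta>, 0)) \<noteq> \<chi>3 (ecls p l (E, 0)) * \<chi>4 (ecls p l (A, 0))"
    using Bor_diag_units[OF k] A1 E1 by (intro char_pair_perturbed[OF c3 c4 l ss])
  ultimately show ?thesis
    unfolding val val' by simp
qed

lemma upper_conj_commutes:
  assumes \<gamma>': "econg p l (emul d \<gamma> \<gamma>') (1, 0)" and tB: "emul d t B = (E - A, 0)"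
  shows "mmul d p l (cmat p l \<alpha> \<beta> (0, 0) \<gamma>) (cmat p l (A, 0) B (0, 0) (E, 0)) =
         mmul d p l (cmat p l (A, 0) (emul d (emul d B (\<alpha> + emul d t \<beta>)) \<gamma>') (0, 0) (E, 0))
                    (cmat p l \<alpha> \<beta> (0, 0) \<gamma>)"
proof -
  let ?B' = "emul d (emul d B (\<alpha> + emul d t \<beta>)) \<gamma>'"
  have "emul d ?B' \<gamma> = emul d (emul d B (\<alpha> + emul d t \<beta>)) (emul d \<gamma> \<gamma>')"
    by (simp add: emul_assoc emul_comm[of d \<gamma>'])
  then have c: "econg p l (emul d ?B' \<gamma>) (emul d B (\<alpha> + emul d t \<beta>))"
    using econg_right_unit[OF \<gamma>'] by simp
  have "emul d B (\<alpha> + emul d t \<beta>) = emul d B \<alpha> + emul d (emul d t B) \<beta>"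
    by (simp add: emul_def algebra_simps)
  then have "emul d B (\<alpha> + emul d t \<beta>) = emul d \<alpha> B + emul d \<beta> (E, 0) - emul d (A, 0) \<beta>"
    unfolding tB by (simp add: emul_def algebra_simps)
  then have eq: "emul d (A, 0) \<beta> + emul d B (\<alpha> + emul d t \<beta>) = emul d \<alpha> B + emul d \<beta> (E, 0)"
    by simp
  have "econg p l (emul d (A, 0) \<beta> + emul d ?B' \<gamma>) (emul d (A, 0) \<beta> + emul d B (\<alpha> + emul d t \<beta>))"
    by (rule econg_add[OF econg_refl c])
  then have "econg p l (emul d (A, 0) \<beta> + emul d ?B' \<gamma>) (emul d \<alpha> B + emul d \<beta> (E, 0))"
    by (simp only: eq)
  then show ?thesis
    by (simp add: cmat_eq_iff emul_comm econg_sym)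
qed

lemma defect_congruence:
  assumes \<gamma>': "econg p l (emul d \<gamma> \<gamma>') (1, 0)" and tB: "emul d t B = (r, 0)"
  shows "econg p l (emul d t (emul d (emul d B (\<alpha> + emul d t \<beta>)) \<gamma>') - (r, 0))
                   (emul d (r, 0) (emul d \<gamma>' (\<alpha> - \<gamma> + emul d t \<beta>)))"
proof -
  have "emul d t (emul d (emul d B (\<alpha> + emul d t \<beta>)) \<gamma>') = emul d (emul d t B) (emul d \<gamma>' (\<alpha> + emul d t \<beta>))"
    by (simp add: emul_def algebra_simps)
  moreover have "emul d (r, 0) (emul d \<gamma>' (\<alpha> - \<gamma> + emul d t \<beta>)) =
      emul d (r, 0) (emul d \<gamma>' (\<alpha> + emul d t \<beta>)) - emul d (r, 0) (emul d \<gamma> \<gamma>')"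
    by (simp add: emul_def algebra_simps)
  moreover have "econg p l (emul d (r, 0) (emul d \<gamma> \<gamma>')) (r, 0)"
    using econg_right_unit[OF \<gamma>'] .
  ultimately show ?thesis
    using tB econg_diff[OF econg_refl] econg_sym by metis
qed

lemma twisted_char_separates:
  assumes c: "is_char d p l (Rl p l u) \<chi>1" "is_char d p l (Rl p l u) \<chi>2"
    "is_char d p l (Rl p l u) \<chi>3" "is_char d p l (Rl p l u) \<chi>4"
    and l: "2 \<le> l" and i: "1 \<le> i"
    and ss: "\<chi>3 (ecls p l (1 + p ^ (l - 1) * a, 0)) * inverse (\<chi>4 (ecls p l (1 + p ^ (l - 1) * a, 0))) \<noteq> 1"
    and x: "cmat p l \<alpha> \<beta> (0, 0) \<gamma> \<in> Bor d p l u" and \<gamma>': "econg p l (emul d \<gamma> \<gamma>') (1, 0)"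
    and k: "cmat p l (A, 0) B (0, 0) (E, 0) \<in> Bor d p l u"
    and tB: "emul d (tau d p u i) B = (E - A, 0)"
    and A1: "p dvd A - 1" and E1: "p dvd E - 1"
    and defect: "econg p l (emul d (E - A, 0) (emul d \<gamma>' (\<alpha> - \<gamma> + emul d (tau d p u i) \<beta>))) (p ^ (l - 1) * a, 0)"
  shows "\<exists>k\<in>Bsub d p l u i. \<exists>k'\<in>Bsub d p l u i.
           mmul d p l (cmat p l \<alpha> \<beta> (0, 0) \<gamma>) k = mmul d p l k' (cmat p l \<alpha> \<beta> (0, 0) \<gamma>) \<and>
           twisted_char \<chi>1 \<chi>2 \<chi>3 \<chi>4 d p l u i k \<noteq> twisted_char \<chi>1 \<chi>2 \<chi>3 \<chi>4 d p l u i k'"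
proof -
  let ?t = "tau d p u i" and ?k = "cmat p l (A, 0) B (0, 0) (E, 0)"
  let ?B' = "emul d (emul d B (\<alpha> + emul d ?t \<beta>)) \<gamma>'"
  let ?k' = "cmat p l (A, 0) ?B' (0, 0) (E, 0)"
  have comm: "mmul d p l (cmat p l \<alpha> \<beta> (0, 0) \<gamma>) ?k = mmul d p l ?k' (cmat p l \<alpha> \<beta> (0, 0) \<gamma>)"
    by (rule upper_conj_commutes[OF \<gamma>' tB])
  have k'B: "?k' \<in> Bor d p l u"
    by (rule Bor_closed_under_conj[OF x k cmat_mats_bigO comm])
  have \<Delta>: "econg p l (emul d ?t ?B' - (E - A, 0)) (p ^ (l - 1) * a, 0)"
    using econg_trans[OF defect_congruence[OF \<gamma>' tB] defect] .
  have "(A, 0) - (E, 0) + emul d ?t B = (0, 0)"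
    using tB by simp
  then have kH: "?k \<in> Bsub d p l u i"
    using Bsub_cmat_iff[OF k] by simp
  have eq: "(A, 0) - (E, 0) + emul d ?t ?B' = emul d ?t ?B' - (E - A, 0)"
    by (simp add: plus_prod_def minus_prod_def algebra_simps)
  have "econg p l (emul d ?t ((A, 0) - (E, 0) + emul d ?t ?B')) (emul d ?t (p ^ (l - 1) * a, 0))"
    unfolding eq by (rule econg_emul[OF econg_refl \<Delta>])
  also have "econg p l (emul d ?t (p ^ (l - 1) * a, 0)) (0, 0)"
    using l by (intro tau_annihilates[OF i]) simp
  finally have k'H: "?k' \<in> Bsub d p l u i"
    using Bsub_cmat_iff[OF k'B] by simp
  show ?thesis
    using kH k'H comm twisted_char_perturbed_ne[OF c l ss k tB A1 E1 \<Delta>] by blast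
qed

lemma defect_identity:
  fixes A E a h q r s v y :: "'a::comm_ring_1"
  assumes EA: "E - A = q * (- E * y * (2 + q * y))" and yv: "y * v = - (a * h)"
    and h: "2 * h = 1" and qr: "q * r = s"
  shows "(E - A) * (v * r) - s * a = s * a * ((E - 1) + E * h * (q * y))"
proof -
  have "(E - A) * (v * r) - s * a = - (E * (y * v) * (2 + q * y) * (q * r)) - s * a"
    by (simp add: EA algebra_simps)
  also have "\<dots> = - (E * (- (a * h)) * (2 + q * y) * s) - s * a"
    by (simp only: yv qr)
  also have "\<dots> = s * a * (E * (2 * h) - 1 + E * h * (q * y))"
    by (simp add: algebra_simps)
  finally show ?thesis by (simp add: h)
qed

lemma unit_pair_with_defect:
  fixes p a h v v' :: "'a::idom"
  assumes dvr: "dvr_unif p" and h: "2 * h = 1" and v: "v * v' = 1"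
    and im: "i + m < l" and i: "1 \<le> i"
  shows "\<exists>A E. A * E = 1 \<and> p dvd A - 1 \<and> p dvd E - 1 \<and> p ^ i dvd E - A \<and>
           p ^ l dvd (E - A) * (v * p ^ m) - p ^ (l - 1) * a"
proof -
  define j where "j = l - 1 - m"
  define q where "q = p ^ j"
  have j: "i \<le> j" and qm: "q * p ^ m = p ^ (l - 1)"
    using im by (auto simp: j_def q_def power_add[symmetric])
  have pq: "p dvd q" using i j by (simp add: q_def dvd_power)
  define y where "y = - (a * v' * h)"
  define A where "A = 1 + q * y"
  have A1: "p dvd A - 1" using pq by (simp add: A_def)
  then obtain E where AE: "A * E = 1" using dvr_unit_near_one[OF dvr] by blast
  have "E - 1 = q * (- E * y)" using AE unfolding A_def by algebra
  then have pE: "p dvd E - 1" using pq by simp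
  have EA: "E - A = q * (- E * y * (2 + q * y))" using AE unfolding A_def by algebra
  have "y * v = - (a * h)"
    using v by (simp add: y_def algebra_simps)
  then have "(E - A) * (v * p ^ m) - p ^ (l - 1) * a = p ^ (l - 1) * a * ((E - 1) + E * h * (q * y))"
    by (rule defect_identity[OF EA _ h qm])
  moreover have "p dvd (E - 1) + E * h * (q * y)"
    using pE pq by simp
  moreover have "p ^ l = p ^ (l - 1) * p" using im by (simp add: power_eq_if)
  ultimately have "p ^ l dvd (E - A) * (v * p ^ m) - p ^ (l - 1) * a"
    by (simp add: mult_dvd_mono)
  moreover have "p ^ i dvd E - A"
    using EA j by (simp add: q_def le_imp_power_dvd dvd_mult2)
  ultimately show ?thesis
    using AE A1 pE by blast
qed

lemma unitary_defect_real:
  fixes p d h :: "'a::comm_ring_1"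
  assumes h: "2 * h = 1" and x: "cmat p l \<alpha> \<beta> (0, 0) \<gamma> \<in> Bor d p l True"
  shows "p ^ l dvd snd (emul d (econj \<alpha>) (\<alpha> - \<gamma> + emul d (tau d p True i) \<beta>))"
proof -
  note rel = unitary_upper_relations[OF x]
  let ?z = "emul d (econj \<gamma>) \<beta>"
  have "fst (?z + emul d (econj \<beta>) \<gamma>) = 2 * fst ?z"
    by (simp add: emul_def econj_def algebra_simps)
  then have "p ^ l dvd h * (2 * fst ?z)"
    using rel(3) by (simp add: econg_def)
  then have z: "p ^ l dvd fst ?z"
    using h by (simp add: mult.assoc[symmetric] mult.commute[of h])
  have "emul d (emul d (econj \<alpha>) \<beta>) (emul d (econj \<gamma>) \<alpha>) = emul d (emul d (econj \<alpha>) \<alpha>) ?z"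
    by (simp add: emul_def econj_def algebra_simps)
  moreover have "fst (emul d (emul d (econj \<alpha>) \<alpha>) ?z) = fst (emul d (econj \<alpha>) \<alpha>) * fst ?z"
    by (simp add: emul_def econj_def)
  ultimately have "p ^ l dvd fst (emul d (econj \<alpha>) \<alpha>) * fst ?z - fst (emul d (econj \<alpha>) \<beta>)"
    using econg_right_unit[OF rel(1), of "emul d (econj \<alpha>) \<beta>"] by (simp add: econg_def)
  then have "p ^ l dvd fst (emul d (econj \<alpha>) \<beta>)"
    using dvd_diff[OF dvd_mult[OF z, of "fst (emul d (econj \<alpha>) \<alpha>)"]] by fastforce
  moreover have "p ^ l dvd snd (emul d (econj \<alpha>) \<gamma>)"
    using rel(2) by (simp add: econg_def)
  moreover have "snd (emul d (econj \<alpha>) (\<alpha> - \<gamma> + emul d (tau d p True i) \<beta>)) =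
      p ^ i * fst (emul d (econj \<alpha>) \<beta>) - snd (emul d (econj \<alpha>) \<gamma>)"
    by (simp add: emul_def econj_def algebra_simps)
  ultimately show ?thesis
    by (simp add: dvd_diff)
qed

lemma Bor_defect_real:
  fixes p d h :: "'a::comm_ring_1"
  assumes h: "2 * h = 1" and R: "in_R u \<alpha>" "in_R u \<beta>" "in_R u \<gamma>"
    and x: "cmat p l \<alpha> \<beta> (0, 0) \<gamma> \<in> Bor d p l u"
  shows "\<exists>\<gamma>'. econg p l (emul d \<gamma> \<gamma>') (1, 0) \<and>
           p ^ l dvd snd (emul d \<gamma>' (\<alpha> - \<gamma> + emul d (tau d p u i) \<beta>))"
proof (cases u)
  case False
  obtain Y where "Y \<in> Rl p l u" "qmul d p l (ecls p l \<gamma>) Y = qone p l"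
    using Bor_diag_units(2)[OF x] by (auto simp: qunits_def)
  then obtain \<gamma>' where "in_R u \<gamma>'" "econg p l (emul d \<gamma> \<gamma>') (1, 0)"
    by (auto simp: Rl_iff qone_def ecls_eq_iff)
  then show ?thesis
    using R False by (intro exI[of _ \<gamma>']) (simp add: in_R_def emul_def)
next
  case True
  then show ?thesis
    using unitary_upper_relations(2)[of p l \<alpha> \<beta> \<gamma> d] unitary_defect_real[OF h, of p l \<alpha> \<beta> \<gamma> d] x
    by (intro exI[of _ "econj \<alpha>"]) (simp add: emul_comm)
qed

lemma defect_not_dvd:
  assumes x: "cmat p l \<alpha> \<beta> (0, 0) \<gamma> \<in> Bor d p l u" and notin: "cmat p l \<alpha> \<beta> (0, 0) \<gamma> \<notin> Bsub d p l u i"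
    and \<gamma>': "econg p l (emul d \<gamma> \<gamma>') (1, 0)"
    and real: "p ^ l dvd snd (emul d \<gamma>' (\<alpha> - \<gamma> + emul d (tau d p u i) \<beta>))"
  shows "\<not> p ^ l dvd p ^ i * fst (emul d \<gamma>' (\<alpha> - \<gamma> + emul d (tau d p u i) \<beta>))"
proof
  let ?t = "tau d p u i" and ?D = "\<alpha> - \<gamma> + emul d (tau d p u i) \<beta>"
  let ?c = "emul d \<gamma>' ?D"
  assume "p ^ l dvd p ^ i * fst ?c"
  then have "econg p l (emul d ?t ?c) (0, 0)"
    using real by (cases u) (simp_all add: econg_def emul_def dvd_mult)
  then have "econg p l (emul d \<gamma> (emul d ?t ?c)) (emul d \<gamma> (0, 0))"
    by (rule econg_emul[OF econg_refl])
  moreover have "emul d \<gamma> (emul d ?t ?c) = emul d ?t (emul d ?D (emul d \<gamma> \<gamma>'))"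
    by (simp add: emul_def algebra_simps)
  moreover have "econg p l (emul d ?t (emul d ?D (emul d \<gamma> \<gamma>'))) (emul d ?t ?D)"
    by (rule econg_emul[OF econg_refl econg_right_unit[OF \<gamma>']])
  ultimately have "econg p l (emul d ?t ?D) (0, 0)"
    by (metis econg_sym econg_trans emul_zero(2))
  then show False
    using notin Bsub_cmat_iff[OF x] by simp
qed

lemma Bor_defect_valuation:
  fixes p d :: "'a::idom"
  assumes dvr: "dvr_unif p" and p2: "\<not> p dvd 2"
    and x: "x \<in> Bor d p l u" and notin: "x \<notin> Bsub d p l u i"
  shows "\<exists>\<alpha> \<beta> \<gamma> \<gamma>' v v' m. x = cmat p l \<alpha> \<beta> (0, 0) \<gamma> \<and> econg p l (emul d \<gamma> \<gamma>') (1, 0) \<and>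
           p ^ l dvd snd (emul d \<gamma>' (\<alpha> - \<gamma> + emul d (tau d p u i) \<beta>)) \<and>
           fst (emul d \<gamma>' (\<alpha> - \<gamma> + emul d (tau d p u i) \<beta>)) = v * p ^ m \<and> v * v' = 1 \<and> i + m < l"
proof -
  obtain h :: 'a where h: "2 * h = 1" using dvr_unit[OF dvr p2] by blast
  obtain \<alpha> \<beta> \<gamma> where R: "in_R u \<alpha>" "in_R u \<beta>" "in_R u \<gamma>" and x_eq: "x = cmat p l \<alpha> \<beta> (0, 0) \<gamma>"
    using Bor_rep[OF x] by blast
  let ?D = "\<alpha> - \<gamma> + emul d (tau d p u i) \<beta>"
  obtain \<gamma>' where \<gamma>': "econg p l (emul d \<gamma> \<gamma>') (1, 0)" and real: "p ^ l dvd snd (emul d \<gamma>' ?D)"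
    using Bor_defect_real[OF h R x[unfolded x_eq]] by blast
  have nd: "\<not> p ^ l dvd p ^ i * fst (emul d \<gamma>' ?D)"
    using defect_not_dvd[OF x[unfolded x_eq] notin[unfolded x_eq] \<gamma>' real] .
  then have "fst (emul d \<gamma>' ?D) \<noteq> 0" by auto
  then obtain v v' m where v: "v * v' = 1" and c: "fst (emul d \<gamma>' ?D) = v * p ^ m"
    using dvr_factor[OF dvr] by blast
  have "p ^ i * fst (emul d \<gamma>' ?D) = p ^ (i + m) * v"
    by (simp add: c power_add ac_simps)
  then have "i + m < l"
    using nd power_exponent_bound by metis
  then show ?thesis
    using x_eq \<gamma>' real c v by blast
qed

lemma Bor_mackey_condition:
  fixes p d :: "'a::idom"
  assumes dvr: "dvr_unif p" and p2: "\<not> p dvd 2" and d: "d dvd 1" and l: "2 \<le> l" and i: "1 \<le> i"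
    and c: "is_char d p l (Rl p l u) \<chi>1" "is_char d p l (Rl p l u) \<chi>2"
    "is_char d p l (Rl p l u) \<chi>3" "is_char d p l (Rl p l u) \<chi>4"
    and ss: "ss_pair p l \<chi>3 \<chi>4"
    and x: "x \<in> Bor d p l u" and notin: "x \<notin> Bsub d p l u i"
  shows "\<exists>k\<in>Bsub d p l u i. \<exists>k'\<in>Bsub d p l u i. mmul d p l x k = mmul d p l k' x \<and>
           twisted_char \<chi>1 \<chi>2 \<chi>3 \<chi>4 d p l u i k \<noteq> twisted_char \<chi>1 \<chi>2 \<chi>3 \<chi>4 d p l u i k'"
proof -
  obtain \<alpha> \<beta> \<gamma> \<gamma>' v v' m where x_eq: "x = cmat p l \<alpha> \<beta> (0, 0) \<gamma>"
    and \<gamma>': "econg p l (emul d \<gamma> \<gamma>') (1, 0)"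
    and real: "p ^ l dvd snd (emul d \<gamma>' (\<alpha> - \<gamma> + emul d (tau d p u i) \<beta>))"
    and val: "fst (emul d \<gamma>' (\<alpha> - \<gamma> + emul d (tau d p u i) \<beta>)) = v * p ^ m"
    and v: "v * v' = 1" and im: "i + m < l"
    using Bor_defect_valuation[OF dvr p2 x notin] by blast
  let ?c = "emul d \<gamma>' (\<alpha> - \<gamma> + emul d (tau d p u i) \<beta>)"
  obtain h :: 'a where h: "2 * h = 1" using dvr_unit[OF dvr p2] by blast
  obtain d' where d': "d * d' = 1" using d by (auto simp: dvd_def)
  obtain a where a: "\<chi>3 (ecls p l (1 + p ^ (l - 1) * a, 0)) * inverse (\<chi>4 (ecls p l (1 + p ^ (l - 1) * a, 0))) \<noteq> 1"
    using ss unfolding ss_pair_def by blast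
  obtain A E where AE: "A * E = 1" and A1: "p dvd A - 1" and E1: "p dvd E - 1"
    and EA: "p ^ i dvd E - A" and defect: "p ^ l dvd (E - A) * (v * p ^ m) - p ^ (l - 1) * a"
    using unit_pair_with_defect[OF dvr h v im i] by blast
  obtain s where s: "E - A = p ^ i * s" using EA by (auto simp: dvd_def)
  obtain B where B: "in_R u B" "u \<longrightarrow> econj B = - B" and tB: "emul d (tau d p u i) B = (E - A, 0)"
    using tau_solvable[OF d', of u p i s] s by auto
  have k: "cmat p l (A, 0) B (0, 0) (E, 0) \<in> Bor d p l u"
    using diag_unit_in_Bor[OF AE B(1)] B(2) by blast
  have "emul d (E - A, 0) ?c = ((E - A) * fst ?c, (E - A) * snd ?c)"
    by (subst (1) emul_def) simp
  then have "econg p l (emul d (E - A, 0) ?c) (p ^ (l - 1) * a, 0)"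
    using defect real by (simp add: econg_def val dvd_mult)
  then show ?thesis
    unfolding x_eq by (rule twisted_char_separates[OF c l i a x[unfolded x_eq] \<gamma>' k tB A1 E1])
qed

lemma mackey_criterion_Bsub:
  fixes p d :: "'a::idom"
  assumes dvr: "dvr_unif p" and fin: "finite (residue_field p)" and p2: "\<not> p dvd 2"
    and d: "d dvd 1" and l: "2 \<le> l" and i: "1 \<le> i"
    and c: "is_char d p l (Rl p l u) \<chi>1" "is_char d p l (Rl p l u) \<chi>2"
    "is_char d p l (Rl p l u) \<chi>3" "is_char d p l (Rl p l u) \<chi>4"
    and ss: "ss_pair p l \<chi>3 \<chi>4"
  shows "mackey_criterion (Bgrp d p l u) (Bsub d p l u i) (twisted_char \<chi>1 \<chi>2 \<chi>3 \<chi>4 d p l u i)"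
proof (intro mackey_criterion.intro induced_character.intro induced_character_axioms.intro
    mackey_criterion_axioms.intro group_Bgrp subgroup_Bsub)
  show "finite (carrier (Bgrp d p l u))"
    using finite_Bor[OF fin] by simp
next
  fix x y assume "x \<in> Bsub d p l u i" "y \<in> Bsub d p l u i"
  then show "twisted_char \<chi>1 \<chi>2 \<chi>3 \<chi>4 d p l u i (x \<otimes>\<^bsub>Bgrp d p l u\<^esub> y) =
      twisted_char \<chi>1 \<chi>2 \<chi>3 \<chi>4 d p l u i x * twisted_char \<chi>1 \<chi>2 \<chi>3 \<chi>4 d p l u i y"
    using twisted_char_mult[OF c] by simp
next
  fix x assume "x \<in> Bsub d p l u i"
  then show "twisted_char \<chi>1 \<chi>2 \<chi>3 \<chi>4 d p l u i x \<noteq> 0"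
    by (rule twisted_char_nonzero[OF c])
next
  fix x assume "x \<in> carrier (Bgrp d p l u) - Bsub d p l u i"
  then show "\<exists>k\<in>Bsub d p l u i. \<exists>k'\<in>Bsub d p l u i.
      x \<otimes>\<^bsub>Bgrp d p l u\<^esub> k = k' \<otimes>\<^bsub>Bgrp d p l u\<^esub> x \<and>
      twisted_char \<chi>1 \<chi>2 \<chi>3 \<chi>4 d p l u i k \<noteq> twisted_char \<chi>1 \<chi>2 \<chi>3 \<chi>4 d p l u i k'"
    using Bor_mackey_condition[OF dvr p2 d l i c ss] by simp
qed

theorem lemma8p1:
  fixes p d :: "'a::idom" and l i :: nat and unitary :: bool
    and \<chi>1 \<chi>2 \<chi>3 \<chi>4 :: "'a cl \<Rightarrow> complex"
  assumes "dvr_unif p" and "pi_complete p"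
    and "finite (residue_field p)" and "\<not> p dvd 2"
    and "d dvd 1" and "\<not> (\<exists>x. x * x = d)"
    and "2 \<le> l"
    and "is_char d p l (Rl p l unitary) \<chi>1" and "is_char d p l (Rl p l unitary) \<chi>2"
    and "is_char d p l (Rl p l unitary) \<chi>3" and "is_char d p l (Rl p l unitary) \<chi>4"
    and "ss_pair p l \<chi>1 \<chi>2" and "ss_pair p l \<chi>3 \<chi>4"
    and "1 \<le> i" and "i \<le> l - 1"
  shows "irred_ind (Bor d p l unitary) (mmul d p l) (Bsub d p l unitary i)
           (\<lambda>x. pchar \<chi>1 \<chi>2 x *
                pchar \<chi>3 \<chi>4 (mmul d p l (minv d p l (Rl p l unitary) (gmat d p l unitary i))
                                       (mmul d p l x (gmat d p l unitary i))))"
proof -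
  have "mackey_criterion (Bgrp d p l unitary) (Bsub d p l unitary i)
      (twisted_char \<chi>1 \<chi>2 \<chi>3 \<chi>4 d p l unitary i)"
    by (rule mackey_criterion_Bsub[OF assms(1,3,4,5,7,14,8-11,13)])
  then have "irred_ind (Bor d p l unitary) (mmul d p l) (Bsub d p l unitary i)
      (twisted_char \<chi>1 \<chi>2 \<chi>3 \<chi>4 d p l unitary i)"
    using mackey_criterion.irred_ind by fastforce
  then show ?thesis
    by (simp add: twisted_char_def[abs_def])
qed

end
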